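(* Let $n\ge 6$ and $U\subset V=\{1,\dotsc,n\}$ with $|U|=m$, $3\le m\le n/2$. Let $A_U$ be the matrix of the quadratic form $q_{h_U}$ on the space of polynomials of degree at most $1$ on $\mathbb{R}^{n(n-1)/2}$, in the monomial basis $\{1\}\cup\{x_{ij}\}$; identify a polynomial of degree at most $1$ with its coefficient vector in this basis. Then the following are eigenvectors of $A_U$ with the stated eigenvalues: (1) $2-\sum_{j\ne i} x_{ij}$, for any $1\le i\le n$: eigenvalue $0$; (2) $x_{ij}-x_{jf}+x_{fg}-x_{gi}$ for distinct $i,j,f,g\in U$: eigenvalue $\frac{2(m-2)}{(n-2)(m-1)}$; (3) $x_{pq}-x_{qr}+x_{rs}-x_{sp}$ for distinct $p,q,r,s\in V\setminus U$: eigenvalue $\frac{2(n-m-2)}{(n-2)(n-m-1)}$; (4) $x_{ip}-x_{iq}+x_{jq}-x_{jp}$ for distinct $i,j\in U$ and distinct $p,q\in V\setminus U$: eigenvalue $\frac{2(m(n-3)(n-m)-(n-2)^2)}{(n-2)(n-3)(m-1)(n-m-1)}$; (5) $\sum_{\ell\in U,\,\ell\ne i,j}\big(\frac{n-m}{m-2}x_{i\ell}-\frac{n-m}{m-2}x_{j\ell}\big)+\sum_{t\in V\setminus U}(-x_{it}+x_{jt})$ for distinct $i,j\in U$: eigenvalue $\frac{2(m-2)}{(n-3)(m-1)}$; (6) $\sum_{t\in V\setminus U,\,t\ne p,q}\big(\frac{m}{n-m-2}x_{pt}-\frac{m}{n-m-2}x_{qt}\big)+\sum_{\ell\in U}(-x_{p\ell}+x_{q\ell})$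 for distinct $p,q\in V\setminus U$: eigenvalue $\frac{2(n-m-2)}{(n-3)(n-m-1)}$.
   Context: Let $N=n(n-1)/2$, coordinates of $\mathbb{R}^N$ indexed by unordered pairs $\{i,j\}$ of distinct elements of $V$, written $x_{ij}=x_{ji}$. Let $X\subset\mathbb{R}^N$ be the set of incidence vectors of Hamiltonian cycles of $K_n$. For $f:X\to\mathbb{R}$, $q_f(h)=\frac{1}{|X|}\sum_{x\in X}f(x)h(x)^2$, and its matrix in the monomial basis has entry indexed by monomials $\mu,\nu$ equal to $\frac{1}{|X|}\sum_{x\in X}f(x)\mu(x)\nu(x)$. For $U\subset V$, $h_U(x)=c\big(\sum_{u\in U,v\in V\setminus U}x_{uv}-2\big)$ with $c>0$ chosen so that $h_U$ has average value $1$ on $X$. *)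

theory Defs
  imports Main "HOL-Library.Function_Algebras" Complex_Main
begin

text \<open>Vertex set V = {1..n}; coordinates indexed by 2-element subsets {i,j} of V.
  A point of R^N is represented as a function from 2-sets to reals.\<close>

definition edges :: "nat \<Rightarrow> nat set set" where
  "edges n = {{i, j} | i j. i \<in> {1..n} \<and> j \<in> {1..n} \<and> i \<noteq> j}"

definition ham_cycles :: "nat \<Rightarrow> nat set set set" where
  "ham_cycles n = {H. \<exists>\<sigma>. bij_betw \<sigma> {..<n} {1..n} \<and>
       H = (\<lambda>k. {\<sigma> k, \<sigma> (Suc k mod n)}) ` {..<n}}"

definition incidence :: "nat set set \<Rightarrow> nat set \<Rightarrow> real" where
  "incidence H = (\<lambda>e. if e \<in> H then 1 else 0)"

definition HX :: "nat \<Rightarrow> (nat set \<Rightarrow> real) set" where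
  "HX n = incidence ` ham_cycles n"

text \<open>Monomial basis of polynomials of degree at most 1: None is the constant 1,
  Some e is the coordinate x_e.\<close>
fun mon :: "nat set option \<Rightarrow> (nat set \<Rightarrow> real) \<Rightarrow> real" where
  "mon None x = 1"
| "mon (Some e) x = x e"

definition basis1 :: "nat \<Rightarrow> nat set option set" where
  "basis1 n = {None} \<union> Some ` edges n"

definition qmat :: "nat \<Rightarrow> ((nat set \<Rightarrow> real) \<Rightarrow> real) \<Rightarrow> nat set option \<Rightarrow> nat set option \<Rightarrow> real" where
  "qmat n f \<mu> \<nu> = (1 / real (card (HX n))) * (\<Sum>x\<in>HX n. f x * mon \<mu> x * mon \<nu> x)"

definition cutval :: "nat \<Rightarrow> nat set \<Rightarrow> (nat set \<Rightarrow> real) \<Rightarrow> real" where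
  "cutval n U x = (\<Sum>u\<in>U. \<Sum>v\<in>{1..n} - U. x {u, v}) - 2"

text \<open>h_U = c * cutval with c chosen so that the average of h_U on X is 1.\<close>
definition hU :: "nat \<Rightarrow> nat set \<Rightarrow> (nat set \<Rightarrow> real) \<Rightarrow> real" where
  "hU n U x = (1 / ((1 / real (card (HX n))) * (\<Sum>y\<in>HX n. cutval n U y))) * cutval n U x"

definition AU :: "nat \<Rightarrow> nat set \<Rightarrow> nat set option \<Rightarrow> nat set option \<Rightarrow> real" where
  "AU n U = qmat n (hU n U)"

definition one_v :: "nat set option \<Rightarrow> real" where
  "one_v = (\<lambda>\<mu>. if \<mu> = None then 1 else 0)"

definition xv :: "nat \<Rightarrow> nat \<Rightarrow> nat set option \<Rightarrow> real" where
  "xv i j = (\<lambda>\<mu>. if \<mu> = Some {i, j} then 1 else 0)"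

definition is_eigvec :: "nat \<Rightarrow> (nat set option \<Rightarrow> nat set option \<Rightarrow> real) \<Rightarrow> (nat set option \<Rightarrow> real) \<Rightarrow> real \<Rightarrow> bool" where
  "is_eigvec n A v lam \<longleftrightarrow>
     (\<forall>\<mu>. \<mu> \<notin> basis1 n \<longrightarrow> v \<mu> = 0) \<and> (\<exists>\<mu>\<in>basis1 n. v \<mu> \<noteq> 0) \<and>
     (\<forall>\<mu>\<in>basis1 n. (\<Sum>\<nu>\<in>basis1 n. A \<mu> \<nu> * v \<nu>) = lam * v \<mu>)"

end

(*
  Every entry of A_U is an average over the Hamiltonian cycles x of the cut size times at most
  two coordinates of x, so everything reduces to moments E[x_e x_f x_g] of at most three edges.
  They follow from two facts: every vertex has degree 2, and relabelling the vertices permutes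
  the Hamiltonian cycles.  Multiplying the degree identity at a vertex by a fixed monomial and
  using the transpositions that fix this monomial expresses the moment of every linear forest
  with at most three edges as a multiple of the moment of a path with three edges, while
  triangles and claws have moment 0.

  The vectors of family (1) vanish on every Hamiltonian cycle.  Each other vector is odd under
  a transposition preserving U (under two of them for the alternating 4-cycles), so the
  eigen-equation only has to be checked at one edge of each orbit, where it is a polynomial
  identity in n and m.  Families (3) and (6) are (2) and (5) for the complement V - U, which
  defines the same cut.
*)

theory Submission
  imports Defs "HOL-Combinatorics.Permutations"
begin

section \<open>Hamiltonian cycles and relabelling\<close>

lemma ham_cycle_adjacent_iff:
  assumes bij: "bij_betw \<sigma> {..<n} {1..n}" and a: "a < n" and b: "b < n"
  shows "{\<sigma> a, \<sigma> b} \<in> (\<lambda>k. {\<sigma> k, \<sigma> (Suc k mod n)}) ` {..<n} \<longleftrightarrow>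
         b = Suc a mod n \<or> a = Suc b mod n"
proof
  assume "{\<sigma> a, \<sigma> b} \<in> (\<lambda>k. {\<sigma> k, \<sigma> (Suc k mod n)}) ` {..<n}"
  then obtain k where k: "k < n" "{\<sigma> a, \<sigma> b} = {\<sigma> k, \<sigma> (Suc k mod n)}" by auto
  have inj: "inj_on \<sigma> {..<n}" and "Suc k mod n < n" using bij a by (auto simp: bij_betw_def)
  from k(2) have "\<sigma> a = \<sigma> k \<and> \<sigma> b = \<sigma> (Suc k mod n)
      \<or> \<sigma> a = \<sigma> (Suc k mod n) \<and> \<sigma> b = \<sigma> k"
    by (auto simp: doubleton_eq_iff)
  then have "a = k \<and> b = Suc k mod n \<or> a = Suc k mod n \<and> b = k"
    using inj_onD[OF inj] a b k(1) \<open>Suc k mod n < n\<close> by (metis lessThan_iff)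
  then show "b = Suc a mod n \<or> a = Suc b mod n" by auto
next
  assume "b = Suc a mod n \<or> a = Suc b mod n"
  then show "{\<sigma> a, \<sigma> b} \<in> (\<lambda>k. {\<sigma> k, \<sigma> (Suc k mod n)}) ` {..<n}"
    using a b by (auto simp: insert_commute)
qed

lemma Suc_mod_eq_if: "a < n \<Longrightarrow> Suc a mod n = (if Suc a = n then 0 else Suc a)"
  by (simp add: mod_if)

lemma card_cycle_neighbours:
  assumes a: "a < n" and n: "3 \<le> n"
  shows "card {b \<in> {..<n} - {a}. b = Suc a mod n \<or> a = Suc b mod n} = 2"
proof -
  have "{b \<in> {..<n} - {a}. b = Suc a mod n \<or> a = Suc b mod n}
      = {Suc a mod n, if a = 0 then n - 1 else a - 1}"
  proof (rule set_eqI)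
    fix b
    have "b < n \<Longrightarrow> a = Suc b mod n \<longleftrightarrow> (if Suc b = n then a = 0 else a = Suc b)"
      by (simp add: Suc_mod_eq_if)
    then show "b \<in> {b \<in> {..<n} - {a}. b = Suc a mod n \<or> a = Suc b mod n}
        \<longleftrightarrow> b \<in> {Suc a mod n, if a = 0 then n - 1 else a - 1}"
      using a n by (cases "b < n") (auto simp: Suc_mod_eq_if)
  qed
  also have "card \<dots> = 2"
    using a n by (auto simp: Suc_mod_eq_if split: if_splits)
  finally show ?thesis .
qed

lemma ham_cycle_degree:
  assumes H: "H \<in> ham_cycles n" and n: "3 \<le> n" and v: "v \<in> {1..n}"
  shows "(\<Sum>w\<in>{1..n} - {v}. incidence H {v, w}) = 2"
proof -
  obtain \<sigma> where bij: "bij_betw \<sigma> {..<n} {1..n}"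
    and H_eq: "H = (\<lambda>k. {\<sigma> k, \<sigma> (Suc k mod n)}) ` {..<n}"
    using H unfolding ham_cycles_def by auto
  obtain a where a: "a < n" "v = \<sigma> a"
    using v bij by (metis bij_betw_iff_bijections lessThan_iff)
  have inj: "inj_on \<sigma> ({..<n} - {a})"
    using bij by (meson bij_betw_def Diff_subset inj_on_subset)
  have "{1..n} - {v} = \<sigma> ` ({..<n} - {a})"
    using bij a by (metis bij_betw_def inj_on_image_set_diff Diff_subset empty_subsetI
        insert_subset lessThan_iff image_empty image_insert)
  then have "(\<Sum>w\<in>{1..n} - {v}. incidence H {v, w}) = (\<Sum>b\<in>{..<n} - {a}. incidence H {\<sigma> a, \<sigma> b})"
    using a by (simp add: sum.reindex[OF inj])
  also have "\<dots> = (\<Sum>b\<in>{..<n} - {a}. if b = Suc a mod n \<or> a = Suc b mod n then 1 else 0)"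
    by (rule sum.cong) (auto simp: incidence_def H_eq ham_cycle_adjacent_iff[OF bij] a(1))
  also have "\<dots> = 2"
    using card_cycle_neighbours[OF a(1) n] by (simp add: sum.If_cases Int_def conj_commute)
  finally show ?thesis .
qed

lemma ham_cycle_no_triangle:
  assumes H: "H \<in> ham_cycles n" and n: "4 \<le> n"
    and abc: "a \<in> {1..n}" "b \<in> {1..n}" "c \<in> {1..n}" "a \<noteq> b" "b \<noteq> c" "a \<noteq> c"
  shows "\<not> ({a, b} \<in> H \<and> {b, c} \<in> H \<and> {c, a} \<in> H)"
proof -
  obtain \<sigma> where bij: "bij_betw \<sigma> {..<n} {1..n}"
    and H_eq: "H = (\<lambda>k. {\<sigma> k, \<sigma> (Suc k mod n)}) ` {..<n}"
    using H unfolding ham_cycles_def by auto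
  have "\<exists>i<n. v = \<sigma> i" if "v \<in> {1..n}" for v
    using bij that by (force simp: bij_betw_def)
  then obtain i j k where ijk: "i < n" "j < n" "k < n" "a = \<sigma> i" "b = \<sigma> j" "c = \<sigma> k"
    using abc(1-3) by meson
  then have "i \<noteq> j" "j \<noteq> k" "i \<noteq> k" using abc by auto
  then show ?thesis
    unfolding H_eq ijk(4-6) ham_cycle_adjacent_iff[OF bij ijk(1,2)]
      ham_cycle_adjacent_iff[OF bij ijk(2,3)] ham_cycle_adjacent_iff[OF bij ijk(3,1)]
    using ijk(1-3) n by (simp add: Suc_mod_eq_if) arith
qed

definition relabel :: "(nat \<Rightarrow> nat) \<Rightarrow> (nat set \<Rightarrow> real) \<Rightarrow> nat set \<Rightarrow> real" where
  "relabel \<pi> x = (\<lambda>e. x (\<pi> ` e))"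

lemma relabel_pair [simp]: "relabel \<pi> x {a, b} = x {\<pi> a, \<pi> b}"
  by (simp add: relabel_def)

lemma relabel_comp: "relabel \<pi> (relabel \<rho> x) = relabel (\<rho> \<circ> \<pi>) x"
  by (simp add: relabel_def image_comp)

lemma relabel_id: "relabel id x = x"
  by (simp add: relabel_def)

lemma relabel_ham_cycle:
  assumes H: "H \<in> ham_cycles n" and \<pi>: "\<pi> permutes {1..n}"
  shows "relabel \<pi> (incidence H) \<in> HX n"
proof -
  obtain \<sigma> where bij: "bij_betw \<sigma> {..<n} {1..n}"
    and H_eq: "H = (\<lambda>k. {\<sigma> k, \<sigma> (Suc k mod n)}) ` {..<n}"
    using H unfolding ham_cycles_def by auto
  define H' where "H' = (\<lambda>k. {(inv \<pi> \<circ> \<sigma>) k, (inv \<pi> \<circ> \<sigma>) (Suc k mod n)}) ` {..<n}"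
  have "bij_betw (inv \<pi> \<circ> \<sigma>) {..<n} {1..n}"
    using bij permutes_imp_bij[OF permutes_inv[OF \<pi>]] by (rule bij_betw_trans)
  then have "H' \<in> ham_cycles n" unfolding ham_cycles_def H'_def by blast
  moreover have "\<pi> ` e \<in> H \<longleftrightarrow> e \<in> H'" for e
  proof -
    have inv_image: "\<pi> ` e = A \<longleftrightarrow> e = inv \<pi> ` A" for A
      using permutes_inj[OF \<pi>] permutes_surj[OF \<pi>] by (metis image_inv_f_f image_f_inv_f)
    have "\<pi> ` e \<in> H \<longleftrightarrow> (\<exists>k<n. \<pi> ` e = {\<sigma> k, \<sigma> (Suc k mod n)})"
      unfolding H_eq by auto
    also have "\<dots> \<longleftrightarrow> e \<in> H'"
      unfolding inv_image H'_def by auto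
    finally show ?thesis .
  qed
  then have "relabel \<pi> (incidence H) = incidence H'"
    by (simp add: relabel_def incidence_def)
  ultimately show ?thesis unfolding HX_def by blast
qed

lemma relabel_HX: "\<pi> permutes {1..n} \<Longrightarrow> x \<in> HX n \<Longrightarrow> relabel \<pi> x \<in> HX n"
  using relabel_ham_cycle unfolding HX_def by blast

lemma bij_betw_relabel_HX:
  assumes \<pi>: "\<pi> permutes {1..n}"
  shows "bij_betw (relabel \<pi>) (HX n) (HX n)"
proof (rule bij_betwI[where g = "relabel (inv \<pi>)"])
  show "relabel \<pi> \<in> HX n \<rightarrow> HX n" "relabel (inv \<pi>) \<in> HX n \<rightarrow> HX n"
    using relabel_HX \<pi> permutes_inv[OF \<pi>] by auto
  show "relabel (inv \<pi>) (relabel \<pi> x) = x" "relabel \<pi> (relabel (inv \<pi>) x) = x" for x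
    using permutes_inv_o[OF \<pi>] by (simp_all add: relabel_comp relabel_id)
qed

lemma sum_HX_relabel:
  "\<pi> permutes {1..n} \<Longrightarrow> (\<Sum>x\<in>HX n. G (relabel \<pi> x)) = (\<Sum>x\<in>HX n. G x)"
  by (rule sum.reindex_bij_betw[OF bij_betw_relabel_HX])

lemma sum_split_off_const:
  fixes g :: "'a \<Rightarrow> real"
  assumes "finite A" "B \<subseteq> A" "\<And>a. a \<in> A - B \<Longrightarrow> g a = k"
  shows "sum g A = sum g B + (real (card A) - real (card B)) * k"
proof -
  have "finite B" using assms(1,2) by (rule rev_finite_subset)
  then have "real (card (A - B)) = real (card A) - real (card B)"
    using assms(2) by (simp add: card_Diff_subset of_nat_diff card_mono[OF assms(1,2)])
  moreover have "sum g (A - B) = (\<Sum>a\<in>A - B. k)"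
    using assms(3) by (rule sum.cong[OF refl])
  ultimately show ?thesis
    using sum.subset_diff[OF assms(2,1), of g] by simp
qed

lemma four_cycle_edge_if_moved:
  assumes "distinct [a, b, c, d]" "i \<noteq> j"
    and "transpose a c ` {i, j} \<noteq> {i, j}" "transpose b d ` {i, j} \<noteq> {i, j}"
  shows "{i, j} \<in> {{a, b}, {b, c}, {c, d}, {d, a}}"
proof -
  have "a \<in> {i, j} \<longleftrightarrow> c \<notin> {i, j}" "b \<in> {i, j} \<longleftrightarrow> d \<notin> {i, j}"
    using assms(3,4) transpose_image_eq[of a "{i, j}" c] transpose_image_eq[of b "{i, j}" d] by blast+
  then obtain x y where xy: "x \<in> {a, c}" "y \<in> {b, d}" "x \<in> {i, j}" "y \<in> {i, j}"
    by blast
  moreover have "x \<noteq> y" using xy assms(1) by auto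
  ultimately have "{i, j} = {x, y}" using assms(2) by auto
  with xy(1,2) show ?thesis by (auto simp: insert_commute)
qed

lemma edge_moved_by_transpose:
  assumes "p \<noteq> q" "transpose i j ` {p, q} \<noteq> {p, q}"
  obtains y where "y \<in> {p, q}" "y \<notin> {i, j}" "{p, q} = {i, y} \<or> {p, q} = {j, y}"
proof -
  have iff: "i \<in> {p, q} \<longleftrightarrow> j \<notin> {p, q}"
    using assms(2) transpose_image_eq[of i "{p, q}" j] by blast
  show ?thesis
  proof (cases "p \<in> {i, j}")
    case True
    with iff assms(1) have "q \<notin> {i, j}" by auto
    with True show ?thesis using that by blast
  next
    case False
    with iff have "q \<in> {i, j}" by auto
    with False show ?thesis using that by (auto simp: insert_commute)
  qed
qed

section \<open>Moments of the uniform Hamiltonian cycle\<close>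

locale ham_cycle_moments =
  fixes n :: nat
  assumes n_ge_6: "6 \<le> n"
begin

abbreviation "S \<equiv> {1..n}"
abbreviation "X \<equiv> HX n"

lemma finite_X: "finite X"
proof -
  have "ham_cycles n \<subseteq> Pow (Pow S)"
    unfolding ham_cycles_def by (auto simp: bij_betw_def)
  then show ?thesis unfolding HX_def by (meson finite_Pow_iff finite_atLeastAtMost finite_imageI finite_subset)
qed

lemma card_X_pos: "card X > 0"
proof -
  have "bij_betw Suc {..<n} S" by (simp add: bij_betw_def image_Suc_lessThan)
  then have "(\<lambda>k. {Suc k, Suc (Suc k mod n)}) ` {..<n} \<in> ham_cycles n"
    unfolding ham_cycles_def by blast
  then show ?thesis using finite_X unfolding HX_def by (auto simp: card_gt_0_iff)
qed

lemma X_01: "x \<in> X \<Longrightarrow> x e = 0 \<or> x e = 1"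
  unfolding HX_def incidence_def by auto

lemma X_idem [simp]: "x \<in> X \<Longrightarrow> x e * x e = x e"
  using X_01[of x e] by auto

lemma X_idem_left [simp]: "x \<in> X \<Longrightarrow> x e * (x e * y) = x e * y"
  by (simp add: mult.assoc[symmetric])

lemma X_nonneg: "x \<in> X \<Longrightarrow> 0 \<le> x e"
  using X_01[of x e] by auto

lemma X_degree: "x \<in> X \<Longrightarrow> v \<in> S \<Longrightarrow> (\<Sum>w\<in>S - {v}. x {v, w}) = 2"
  unfolding HX_def using ham_cycle_degree n_ge_6 by auto

lemma X_no_triangle:
  "x \<in> X \<Longrightarrow> {a, b, c} \<subseteq> S \<Longrightarrow> distinct [a, b, c] \<Longrightarrow> x {a, b} * x {b, c} * x {c, a} = 0"
  unfolding HX_def incidence_def using ham_cycle_no_triangle[of _ n a b c] n_ge_6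
  by (auto split: if_splits)

lemma X_no_claw:
  assumes x: "x \<in> X" and "{a, b, c, d} \<subseteq> S" "distinct [a, b, c, d]"
  shows "x {a, b} * x {a, c} * x {a, d} = 0"
proof (rule ccontr)
  assume "x {a, b} * x {a, c} * x {a, d} \<noteq> 0"
  then have "x {a, b} = 1" "x {a, c} = 1" "x {a, d} = 1"
    using X_01[OF x] by (metis mult_zero_left mult_zero_right)+
  moreover have "(\<Sum>w\<in>{b, c, d}. x {a, w}) \<le> (\<Sum>w\<in>S - {a}. x {a, w})"
    by (rule sum_mono2) (use assms X_nonneg in auto)
  ultimately show False using X_degree assms by simp
qed

text \<open>\<open>\<rho>\<close> is the moment of a path with three edges (\<open>moment_path3\<close>);
  all other moments are multiples of it.\<close>

definition \<rho> :: real where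
  "\<rho> = 2 * real (card X) / ((real n - 1) * (real n - 2) * (real n - 3))"

lemma rho_pos: "\<rho> > 0"
  unfolding \<rho>_def using card_X_pos n_ge_6 by simp

text \<open>Multiply the degree identity at \<open>c\<close> by \<open>Q\<close>: the transposition of \<open>d\<close> and \<open>w\<close>
  fixes \<open>Q\<close>, so all \<open>w\<close> outside \<open>insert c B\<close> contribute the same moment.\<close>

lemma sum_moment_degree:
  assumes B: "insert c B \<subseteq> S" "c \<notin> B" "d \<in> S - insert c B"
    and Q: "\<And>x y. (\<And>e. e \<subseteq> insert c B \<Longrightarrow> x e = y e) \<Longrightarrow> Q x = Q y"
  shows "2 * (\<Sum>x\<in>X. Q x) = (\<Sum>w\<in>B. \<Sum>x\<in>X. Q x * x {c, w})
           + (real n - real (card B) - 1) * (\<Sum>x\<in>X. Q x * x {c, d})"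
proof -
  let ?g = "\<lambda>w. \<Sum>x\<in>X. Q x * x {c, w}"
  have g_const: "?g w = ?g d" if w: "w \<in> S - insert c B" for w
  proof -
    let ?\<tau> = "transpose d w"
    have "?\<tau> ` e = e" if "e \<subseteq> insert c B" for e
      using that B w by (intro transpose_image_eq) auto
    then have "Q (relabel ?\<tau> x) = Q x" for x
      by (intro Q) (simp add: relabel_def)
    moreover have "?\<tau> c = c"
      using B w by (intro transpose_apply_other) auto
    ultimately have "?g d = (\<Sum>x\<in>X. Q x * x {c, w})"
      using sum_HX_relabel[of ?\<tau> n "\<lambda>x. Q x * x {c, d}"] permutes_swap_id[of d S w] B w
      by simp
    then show ?thesis ..
  qed
  have "(\<Sum>w\<in>S - {c}. ?g w) = (\<Sum>w\<in>B. ?g w) + (real (card (S - {c})) - real (card B)) * ?g d"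
  proof (rule sum_split_off_const)
    show "B \<subseteq> S - {c}" using B by auto
    show "?g w = ?g d" if "w \<in> S - {c} - B" for w
      using that by (intro g_const) auto
  qed simp
  also have "real (card (S - {c})) = real n - 1"
    using B n_ge_6 by (simp add: of_nat_diff)
  also have "(\<Sum>w\<in>S - {c}. ?g w) = (\<Sum>x\<in>X. Q x * (\<Sum>w\<in>S - {c}. x {c, w}))"
    by (simp add: sum_distrib_left sum.swap[of _ X])
  also have "\<dots> = (\<Sum>x\<in>X. Q x * 2)"
    using X_degree B(1) by (intro sum.cong refl) (metis insert_subset)
  also have "\<dots> = 2 * (\<Sum>x\<in>X. Q x)"
    by (simp add: sum_distrib_left mult.commute)
  finally show ?thesis by simp
qed

lemma moment_edge:
  assumes "{a, b} \<subseteq> S" "a \<noteq> b"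
  shows "(\<Sum>x\<in>X. x {a, b}) = (real n - 2) * (real n - 3) * \<rho>"
proof -
  have "(real n - 1) * (\<Sum>x\<in>X. x {a, b}) = 2 * real (card X)"
    using sum_moment_degree[of a "{}" b "\<lambda>_. 1"] assms by simp
  moreover have "(real n - 1) * ((real n - 2) * (real n - 3) * \<rho>) = 2 * real (card X)"
    using n_ge_6 unfolding \<rho>_def by simp
  ultimately have "(real n - 1) * (\<Sum>x\<in>X. x {a, b}) = (real n - 1) * ((real n - 2) * (real n - 3) * \<rho>)"
    by linarith
  then show ?thesis using n_ge_6 by simp
qed

lemma moment_path2:
  assumes "{a, b, c} \<subseteq> S" "distinct [a, b, c]"
  shows "(\<Sum>x\<in>X. x {a, b} * x {b, c}) = (real n - 3) * \<rho>"
proof -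
  have "2 * (\<Sum>x\<in>X. x {a, b}) = (\<Sum>w\<in>{a}. \<Sum>x\<in>X. x {a, b} * x {b, w})
      + (real n - real (card {a}) - 1) * (\<Sum>x\<in>X. x {a, b} * x {b, c})"
    by (rule sum_moment_degree) (use assms in auto)
  then have "(real n - 2) * (\<Sum>x\<in>X. x {a, b} * x {b, c}) = (real n - 2) * ((real n - 3) * \<rho>)"
    using assms moment_edge[of a b] by (simp add: insert_commute)
  then show ?thesis using n_ge_6 by simp
qed

lemma moment_two_edges:
  assumes "{a, b, c, d} \<subseteq> S" "distinct [a, b, c, d]"
  shows "(\<Sum>x\<in>X. x {a, b} * x {c, d}) = 2 * (real n - 3) * \<rho>"
proof -
  have "2 * (\<Sum>x\<in>X. x {a, b}) = (\<Sum>w\<in>{a, b}. \<Sum>x\<in>X. x {a, b} * x {c, w})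
      + (real n - real (card {a, b}) - 1) * (\<Sum>x\<in>X. x {a, b} * x {c, d})"
    by (rule sum_moment_degree) (use assms in auto)
  moreover have "(\<Sum>x\<in>X. x {a, b} * x {c, a}) = (real n - 3) * \<rho>"
    using assms moment_path2[of b a c] by (simp add: insert_commute)
  moreover have "(\<Sum>x\<in>X. x {a, b} * x {c, b}) = (real n - 3) * \<rho>"
    using assms moment_path2[of a b c] by (simp add: insert_commute)
  ultimately have "(real n - 3) * (\<Sum>x\<in>X. x {a, b} * x {c, d}) = (real n - 3) * (2 * (real n - 3) * \<rho>)"
    using assms moment_edge[of a b] by (simp add: algebra_simps)
  then show ?thesis using n_ge_6 by simp
qed

lemma moment_path3:
  assumes "{a, b, c, d} \<subseteq> S" "distinct [a, b, c, d]"
  shows "(\<Sum>x\<in>X. x {a, b} * x {b, c} * x {c, d}) = \<rho>"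
proof -
  have "2 * (\<Sum>x\<in>X. x {a, b} * x {b, c}) = (\<Sum>w\<in>{a, b}. \<Sum>x\<in>X. x {a, b} * x {b, c} * x {c, w})
      + (real n - real (card {a, b}) - 1) * (\<Sum>x\<in>X. x {a, b} * x {b, c} * x {c, d})"
    by (rule sum_moment_degree) (use assms in auto)
  moreover have "(\<Sum>x\<in>X. x {a, b} * x {b, c} * x {c, a}) = 0"
    by (rule sum.neutral) (use assms X_no_triangle in auto)
  moreover have "(\<Sum>x\<in>X. x {a, b} * x {b, c} * x {c, b}) = (real n - 3) * \<rho>"
    using assms moment_path2[of a b c] by (simp add: insert_commute mult.assoc)
  ultimately have "(real n - 3) * (\<Sum>x\<in>X. x {a, b} * x {b, c} * x {c, d}) = (real n - 3) * \<rho>"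
    using assms moment_path2[of a b c] by (simp add: algebra_simps)
  then show ?thesis using n_ge_6 by simp
qed

lemma moment_path2_edge:
  assumes "{a, b, c, d, e} \<subseteq> S" "distinct [a, b, c, d, e]"
  shows "(\<Sum>x\<in>X. x {a, b} * x {b, c} * x {d, e}) = 2 * \<rho>"
proof -
  have "2 * (\<Sum>x\<in>X. x {a, b} * x {b, c}) = (\<Sum>w\<in>{a, b, c}. \<Sum>x\<in>X. x {a, b} * x {b, c} * x {d, w})
      + (real n - real (card {a, b, c}) - 1) * (\<Sum>x\<in>X. x {a, b} * x {b, c} * x {d, e})"
    by (rule sum_moment_degree) (use assms in auto)
  moreover have "(\<Sum>x\<in>X. x {a, b} * x {b, c} * x {d, a}) = \<rho>"
    using assms moment_path3[of d a b c] by (auto simp: insert_commute mult_ac)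
  moreover have "(\<Sum>x\<in>X. x {a, b} * x {b, c} * x {d, b}) = 0"
    by (rule sum.neutral) (use assms X_no_claw[of _ b a c d] in \<open>auto simp: insert_commute\<close>)
  moreover have "(\<Sum>x\<in>X. x {a, b} * x {b, c} * x {d, c}) = \<rho>"
    using assms moment_path3[of a b c d] by (simp add: insert_commute)
  ultimately have "(real n - 4) * (\<Sum>x\<in>X. x {a, b} * x {b, c} * x {d, e}) = (real n - 4) * (2 * \<rho>)"
    using assms moment_path2[of a b c] by (simp add: algebra_simps)
  then show ?thesis using n_ge_6 by simp
qed

lemma moment_three_edges:
  assumes "{a, b, c, d, e, f} \<subseteq> S" "distinct [a, b, c, d, e, f]"
  shows "(\<Sum>x\<in>X. x {a, b} * x {c, d} * x {e, f}) = 4 * \<rho>"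
proof -
  have "2 * (\<Sum>x\<in>X. x {a, b} * x {c, d}) = (\<Sum>w\<in>{a, b, c, d}. \<Sum>x\<in>X. x {a, b} * x {c, d} * x {e, w})
      + (real n - real (card {a, b, c, d}) - 1) * (\<Sum>x\<in>X. x {a, b} * x {c, d} * x {e, f})"
    by (rule sum_moment_degree) (use assms in auto)
  moreover have "(\<Sum>x\<in>X. x {a, b} * x {c, d} * x {e, a}) = 2 * \<rho>"
    using assms moment_path2_edge[of e a b c d] by (auto simp: insert_commute mult_ac)
  moreover have "(\<Sum>x\<in>X. x {a, b} * x {c, d} * x {e, b}) = 2 * \<rho>"
    using assms moment_path2_edge[of a b e c d] by (auto simp: insert_commute mult_ac)
  moreover have "(\<Sum>x\<in>X. x {a, b} * x {c, d} * x {e, c}) = 2 * \<rho>"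
    using assms moment_path2_edge[of e c d a b] by (auto simp: insert_commute mult_ac)
  moreover have "(\<Sum>x\<in>X. x {a, b} * x {c, d} * x {e, d}) = 2 * \<rho>"
    using assms moment_path2_edge[of c d e a b] by (auto simp: insert_commute mult_ac)
  ultimately have "(real n - 5) * (\<Sum>x\<in>X. x {a, b} * x {c, d} * x {e, f}) = (real n - 5) * (4 * \<rho>)"
    using assms moment_two_edges[of a b c d] by (simp add: algebra_simps)
  then show ?thesis using n_ge_6 by simp
qed

end

section \<open>Moments weighted by the cut size\<close>

text \<open>The assumptions on \<open>U\<close> are invariant under passing to the complement \<open>S - U\<close>.\<close>

locale ham_cut = ham_cycle_moments +
  fixes U :: "nat set"
  assumes U_subset: "U \<subseteq> S" and card_U_ge: "3 \<le> card U" and card_U_le: "card U + 3 \<le> n"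
begin

abbreviation "m \<equiv> card U"
abbreviation "W \<equiv> S - U"

lemma finite_U: "finite U"
  using U_subset finite_subset by blast

lemma U_W_neq: "u \<in> U \<Longrightarrow> w \<notin> U \<Longrightarrow> u \<noteq> w \<and> w \<noteq> u"
  by auto

text \<open>Membership in \<open>S\<close> in the form the simplifier normalises it to.\<close>

lemma U_bounds: "u \<in> U \<Longrightarrow> Suc 0 \<le> u \<and> u \<le> n"
  using U_subset by auto

lemma real_card_W: "real (card W) = real n - real m"
  using U_subset finite_U card_U_le by (simp add: card_Diff_subset of_nat_diff)

lemma W_nonempty: "W \<noteq> {}"
proof -
  have "real (card W) > 0" using real_card_W card_U_le by simp
  then show ?thesis by (metis card.empty of_nat_0 less_irrefl)
qed

lemma sum_W_split:
  assumes "B \<subseteq> W" "\<And>w. w \<in> W - B \<Longrightarrow> g w = k"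
  shows "sum g W = sum g B + (real n - real m - real (card B)) * k"
  by (rule sum_split_off_const[of W B g k, unfolded real_card_W]) (use assms in auto)

lemma sum_W_const: "(\<And>w. w \<in> W \<Longrightarrow> g w = k) \<Longrightarrow> sum g W = (real n - real m) * k"
  using sum_W_split[of "{}" g k] by simp

lemma sum_U_split:
  "B \<subseteq> U \<Longrightarrow> (\<And>u. u \<in> U - B \<Longrightarrow> g u = k) \<Longrightarrow>
     sum g U = sum g B + (real m - real (card B)) * k"
  using sum_split_off_const[of U B g k] finite_U by simp

definition cut_mom2 :: "nat set \<Rightarrow> nat set \<Rightarrow> real" where
  "cut_mom2 e f = (\<Sum>x\<in>X. cutval n U x * x e * x f)"

lemma cut_mom2_eq:
  "cut_mom2 e f = (\<Sum>u\<in>U. \<Sum>w\<in>W. \<Sum>x\<in>X. x {u, w} * x e * x f) - 2 * (\<Sum>x\<in>X. x e * x f)"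
  unfolding cut_mom2_def cutval_def
  by (simp add: sum_subtractf sum_distrib_left sum_distrib_right sum.swap[of _ X] algebra_simps)

text \<open>The suffixes give the sides of the vertices, the centre first for a cherry (two edges
  with a common vertex).  Each proof expands the cut by \<open>cut_mom2_eq\<close> and sorts the edges
  \<open>{u, w}\<close> across the cut by the shape of the graph they form with \<open>e\<close> and \<open>f\<close>.\<close>

lemma cut_mom2_edge_UU:
  assumes ab: "a \<in> U" "b \<in> U" "a \<noteq> b"
  shows "cut_mom2 {a, b} {a, b} = 2 * (real n - 3) * (real m - 2) * (real n - real m - 1) * \<rho>"
proof -
  let ?t = "\<lambda>u w. \<Sum>x\<in>X. x {u, w} * x {a, b} * x {a, b}"
  have end_term: "?t u w = (real n - 3) * \<rho>" if "u \<in> {a, b}" "w \<in> W" for u w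
    using that ab moment_path2[of w a b] moment_path2[of a b w]
    by (auto simp: U_bounds U_W_neq insert_commute mult_ac)
  have off_term: "?t u w = 2 * (real n - 3) * \<rho>" if "u \<in> U - {a, b}" "w \<in> W" for u w
    using that ab moment_two_edges[of u w a b] by (auto simp: U_bounds U_W_neq mult_ac)
  have "(\<Sum>u\<in>U. \<Sum>w\<in>W. ?t u w) = (\<Sum>u\<in>{a, b}. \<Sum>w\<in>W. ?t u w)
      + (real m - 2) * ((real n - real m) * (2 * (real n - 3) * \<rho>))"
    using ab sum_U_split[of "{a, b}", OF _ sum_W_const[OF off_term]] by simp
  also have "(\<Sum>u\<in>{a, b}. \<Sum>w\<in>W. ?t u w) = 2 * ((real n - real m) * ((real n - 3) * \<rho>))"
    using ab sum_W_const[OF end_term] by simp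
  finally have "(\<Sum>u\<in>U. \<Sum>w\<in>W. ?t u w) = 2 * (real m - 1) * (real n - real m) * (real n - 3) * \<rho>"
    by (simp add: algebra_simps)
  moreover have "(\<Sum>x\<in>X. x {a, b} * x {a, b}) = (real n - 2) * (real n - 3) * \<rho>"
    using ab moment_edge[of a b] by (simp add: U_bounds)
  ultimately show ?thesis
    unfolding cut_mom2_eq by (simp add: algebra_simps)
qed

lemma cut_mom2_edge_UW:
  assumes a: "a \<in> U" and b: "b \<in> W"
  shows "cut_mom2 {a, b} {a, b} = 2 * (real n - 3) * (real m - 1) * (real n - real m - 1) * \<rho>"
proof -
  let ?t = "\<lambda>u w. \<Sum>x\<in>X. x {u, w} * x {a, b} * x {a, b}"
  have edge: "(\<Sum>x\<in>X. x {a, b} * x {a, b}) = (real n - 2) * (real n - 3) * \<rho>"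
    using a b moment_edge[of a b] by (simp add: U_bounds U_W_neq)
  have path_a: "?t a w = (real n - 3) * \<rho>" if "w \<in> W - {b}" for w
    using that a b moment_path2[of w a b] by (auto simp: U_bounds U_W_neq insert_commute mult_ac)
  have path_b: "?t u b = (real n - 3) * \<rho>" if "u \<in> U - {a}" for u
    using that a b moment_path2[of u b a] by (auto simp: U_bounds U_W_neq insert_commute mult_ac)
  have off_term: "?t u w = 2 * (real n - 3) * \<rho>" if "u \<in> U - {a}" "w \<in> W - {b}" for u w
    using that a b moment_two_edges[of u w a b] by (auto simp: U_bounds U_W_neq mult_ac)
  have "(\<Sum>w\<in>W. ?t u w) = (real n - 3) * \<rho> + (real n - real m - 1) * (2 * (real n - 3) * \<rho>)"
    if "u \<in> U - {a}" for u
    using b path_b[OF that] sum_W_split[of "{b}", OF _ off_term[OF that]] by simp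
  then have "(\<Sum>u\<in>U. \<Sum>w\<in>W. ?t u w) = (\<Sum>w\<in>W. ?t a w)
      + (real m - 1) * ((real n - 3) * \<rho> + (real n - real m - 1) * (2 * (real n - 3) * \<rho>))"
    using a sum_U_split[of "{a}"] by simp
  also have "(\<Sum>w\<in>W. ?t a w) = (real n - 2) * (real n - 3) * \<rho> + (real n - real m - 1) * ((real n - 3) * \<rho>)"
    using b edge sum_W_split[of "{b}", OF _ path_a] by simp
  finally show ?thesis
    unfolding cut_mom2_eq edge by (simp add: algebra_simps)
qed

lemma cut_mom2_cherry_UUU:
  assumes abc: "a \<in> U" "b \<in> U" "c \<in> U" "distinct [a, b, c]"
  shows "cut_mom2 {c, a} {c, b} = 2 * (real m - 3) * (real n - real m - 1) * \<rho>"
proof -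
  let ?t = "\<lambda>u w. \<Sum>x\<in>X. x {u, w} * x {c, a} * x {c, b}"
  have claw: "?t c w = 0" if "w \<in> W" for w
    by (rule sum.neutral) (use that abc X_no_claw[of _ c a b w] in \<open>auto simp: U_bounds U_W_neq mult_ac\<close>)
  have path_a: "?t a w = \<rho>" if "w \<in> W" for w
    using that abc moment_path3[of w a c b] by (auto simp: U_bounds U_W_neq insert_commute mult_ac)
  have path_b: "?t b w = \<rho>" if "w \<in> W" for w
    using that abc moment_path3[of w b c a] by (auto simp: U_bounds U_W_neq insert_commute mult_ac)
  have off_term: "?t u w = 2 * \<rho>" if "u \<in> U - {a, b, c}" "w \<in> W" for u w
    using that abc moment_path2_edge[of a c b u w] by (auto simp: U_bounds U_W_neq insert_commute mult_ac)
  have "(\<Sum>u\<in>U. \<Sum>w\<in>W. ?t u w) = (\<Sum>u\<in>{a, b, c}. \<Sum>w\<in>W. ?t u w)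
      + (real m - 3) * ((real n - real m) * (2 * \<rho>))"
    using abc sum_U_split[of "{a, b, c}", OF _ sum_W_const[OF off_term]] by simp
  also have "(\<Sum>u\<in>{a, b, c}. \<Sum>w\<in>W. ?t u w) = 2 * ((real n - real m) * \<rho>)"
    using abc sum_W_const[OF claw] sum_W_const[OF path_a] sum_W_const[OF path_b] by simp
  finally show ?thesis
    using abc moment_path2[of a c b]
    unfolding cut_mom2_eq by (simp add: U_bounds insert_commute algebra_simps)
qed

lemma cut_mom2_cherry_UWW:
  assumes c: "c \<in> U" and ab: "a \<in> W" "b \<in> W" "a \<noteq> b"
  shows "cut_mom2 {c, a} {c, b} = 2 * (real m - 1) * (real n - real m - 1) * \<rho>"
proof -
  let ?t = "\<lambda>u w. \<Sum>x\<in>X. x {u, w} * x {c, a} * x {c, b}"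
  have cherry: "(\<Sum>x\<in>X. x {c, a} * x {c, b}) = (real n - 3) * \<rho>"
    using c ab moment_path2[of a c b] by (auto simp: U_bounds U_W_neq insert_commute)
  have claw: "?t c w = 0" if "w \<in> W - {a, b}" for w
    by (rule sum.neutral) (use that c ab X_no_claw[of _ c a b w] in \<open>auto simp: U_bounds U_W_neq mult_ac\<close>)
  have path_a: "?t u a = \<rho>" if "u \<in> U - {c}" for u
    using that c ab moment_path3[of u a c b] by (auto simp: U_bounds U_W_neq insert_commute mult_ac)
  have path_b: "?t u b = \<rho>" if "u \<in> U - {c}" for u
    using that c ab moment_path3[of u b c a] by (auto simp: U_bounds U_W_neq insert_commute mult_ac)
  have off_term: "?t u w = 2 * \<rho>" if "u \<in> U - {c}" "w \<in> W - {a, b}" for u w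
    using that c ab moment_path2_edge[of a c b u w] by (auto simp: U_bounds U_W_neq insert_commute mult_ac)
  have "(\<Sum>w\<in>W. ?t u w) = 2 * \<rho> + (real n - real m - 2) * (2 * \<rho>)" if "u \<in> U - {c}" for u
    using ab path_a[OF that] path_b[OF that] sum_W_split[of "{a, b}", OF _ off_term[OF that]] by simp
  then have "(\<Sum>u\<in>U. \<Sum>w\<in>W. ?t u w) = (\<Sum>w\<in>W. ?t c w)
      + (real m - 1) * (2 * \<rho> + (real n - real m - 2) * (2 * \<rho>))"
    using c sum_U_split[of "{c}"] by simp
  also have "(\<Sum>w\<in>W. ?t c w) = 2 * ((real n - 3) * \<rho>)"
    using ab cherry sum_W_split[of "{a, b}" "?t c" 0, OF _ claw] by (simp add: mult_ac)
  finally show ?thesis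
    unfolding cut_mom2_eq cherry by (simp add: algebra_simps)
qed

lemma cut_mom2_cherry_WUU:
  assumes c: "c \<in> W" and ab: "a \<in> U" "b \<in> U" "a \<noteq> b"
  shows "cut_mom2 {c, a} {c, b} = 2 * (real m - 1) * (real n - real m - 1) * \<rho>"
proof -
  let ?t = "\<lambda>u w. \<Sum>x\<in>X. x {u, w} * x {c, a} * x {c, b}"
  have cherry: "(\<Sum>x\<in>X. x {c, a} * x {c, b}) = (real n - 3) * \<rho>"
    using c ab moment_path2[of a c b] by (auto simp: U_bounds U_W_neq insert_commute)
  have path_a: "?t a w = \<rho>" if "w \<in> W - {c}" for w
    using that c ab moment_path3[of w a c b] by (auto simp: U_bounds U_W_neq insert_commute mult_ac)
  have path_b: "?t b w = \<rho>" if "w \<in> W - {c}" for w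
    using that c ab moment_path3[of w b c a] by (auto simp: U_bounds U_W_neq insert_commute mult_ac)
  have claw: "?t u c = 0" if "u \<in> U - {a, b}" for u
    by (rule sum.neutral) (use that c ab X_no_claw[of _ c a b u] in \<open>auto simp: U_bounds U_W_neq insert_commute mult_ac\<close>)
  have off_term: "?t u w = 2 * \<rho>" if "u \<in> U - {a, b}" "w \<in> W - {c}" for u w
    using that c ab moment_path2_edge[of a c b u w] by (auto simp: U_bounds U_W_neq insert_commute mult_ac)
  have "(\<Sum>w\<in>W. ?t u w) = (real n - real m - 1) * (2 * \<rho>)" if "u \<in> U - {a, b}" for u
    using c claw[OF that] sum_W_split[of "{c}", OF _ off_term[OF that]] by simp
  then have "(\<Sum>u\<in>U. \<Sum>w\<in>W. ?t u w) = (\<Sum>w\<in>W. ?t a w) + (\<Sum>w\<in>W. ?t b w)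
      + (real m - 2) * ((real n - real m - 1) * (2 * \<rho>))"
    using ab sum_U_split[of "{a, b}"] by simp
  also have "(\<Sum>w\<in>W. ?t a w) = (real n - 3) * \<rho> + (real n - real m - 1) * \<rho>"
    using c cherry sum_W_split[of "{c}" "?t a" \<rho>, OF _ path_a] by (simp add: insert_commute)
  also have "(\<Sum>w\<in>W. ?t b w) = (real n - 3) * \<rho> + (real n - real m - 1) * \<rho>"
    using c cherry sum_W_split[of "{c}" "?t b" \<rho>, OF _ path_b] by (simp add: insert_commute mult_ac)
  finally show ?thesis
    unfolding cut_mom2_eq cherry by (simp add: algebra_simps)
qed

lemma cut_mom2_matching_UUUU:
  assumes abcd: "a \<in> U" "b \<in> U" "c \<in> U" "d \<in> U" "distinct [a, b, c, d]"
  shows "cut_mom2 {a, b} {c, d} = 4 * (real m - 3) * (real n - real m - 1) * \<rho>"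
proof -
  let ?t = "\<lambda>u w. \<Sum>x\<in>X. x {u, w} * x {a, b} * x {c, d}"
  have end_term: "?t u w = 2 * \<rho>" if "u \<in> {a, b, c, d}" "w \<in> W" for u w
    using that abcd moment_path2_edge[of w a b c d] moment_path2_edge[of w b a c d]
      moment_path2_edge[of w c d a b] moment_path2_edge[of w d c a b]
    by (auto simp: U_bounds U_W_neq insert_commute mult_ac)
  have off_term: "?t u w = 4 * \<rho>" if "u \<in> U - {a, b, c, d}" "w \<in> W" for u w
    using that abcd moment_three_edges[of a b c d u w] by (auto simp: U_bounds U_W_neq mult_ac)
  have "(\<Sum>u\<in>U. \<Sum>w\<in>W. ?t u w) = (\<Sum>u\<in>{a, b, c, d}. \<Sum>w\<in>W. ?t u w)
      + (real m - 4) * ((real n - real m) * (4 * \<rho>))"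
    using abcd sum_U_split[of "{a, b, c, d}", OF _ sum_W_const[OF off_term]] by simp
  also have "(\<Sum>u\<in>{a, b, c, d}. \<Sum>w\<in>W. ?t u w) = 4 * ((real n - real m) * (2 * \<rho>))"
    using abcd sum_W_const[OF end_term] by simp
  finally show ?thesis
    using abcd moment_two_edges[of a b c d]
    unfolding cut_mom2_eq by (simp add: U_bounds algebra_simps)
qed

lemma cut_mom2_matching_UWUW:
  assumes ac: "a \<in> U" "c \<in> U" "a \<noteq> c" and bd: "b \<in> W" "d \<in> W" "b \<noteq> d"
  shows "cut_mom2 {a, b} {c, d} = (4 * (real m - 1) * (real n - real m - 1) - 2) * \<rho>"
proof -
  let ?t = "\<lambda>u w. \<Sum>x\<in>X. x {u, w} * x {a, b} * x {c, d}"
  have matching: "(\<Sum>x\<in>X. x {a, b} * x {c, d}) = 2 * (real n - 3) * \<rho>"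
    using ac bd moment_two_edges[of a b c d] by (auto simp: U_bounds U_W_neq)
  have path: "?t a d = \<rho>" "?t c b = \<rho>"
    using ac bd moment_path3[of b a d c] moment_path3[of a b c d]
    by (auto simp: U_bounds U_W_neq insert_commute mult_ac)
  have end_term: "?t u w = 2 * \<rho>" if "u \<in> {a, c}" "w \<in> W - {b, d}" for u w
    using that ac bd moment_path2_edge[of w a b c d] moment_path2_edge[of w c d a b]
    by (auto simp: U_bounds U_W_neq insert_commute mult_ac)
  have end_term': "?t u w = 2 * \<rho>" if "u \<in> U - {a, c}" "w \<in> {b, d}" for u w
    using that ac bd moment_path2_edge[of u b a c d] moment_path2_edge[of u d c a b]
    by (auto simp: U_bounds U_W_neq insert_commute mult_ac)
  have off_term: "?t u w = 4 * \<rho>" if "u \<in> U - {a, c}" "w \<in> W - {b, d}" for u w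
    using that ac bd moment_three_edges[of a b c d u w] by (auto simp: U_bounds U_W_neq mult_ac)
  have "(\<Sum>w\<in>W. ?t u w) = 4 * \<rho> + (real n - real m - 2) * (4 * \<rho>)" if "u \<in> U - {a, c}" for u
    using bd end_term'[OF that] sum_W_split[of "{b, d}", OF _ off_term[OF that]] by simp
  then have "(\<Sum>u\<in>U. \<Sum>w\<in>W. ?t u w) = (\<Sum>w\<in>W. ?t a w) + (\<Sum>w\<in>W. ?t c w)
      + (real m - 2) * (4 * \<rho> + (real n - real m - 2) * (4 * \<rho>))"
    using ac sum_U_split[of "{a, c}"] by simp
  also have "(\<Sum>w\<in>W. ?t a w) = 2 * (real n - 3) * \<rho> + \<rho> + (real n - real m - 2) * (2 * \<rho>)"
    using bd matching path sum_W_split[of "{b, d}" "?t a" "2 * \<rho>", OF _ end_term[of a]] by (simp add: mult_ac)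
  also have "(\<Sum>w\<in>W. ?t c w) = \<rho> + 2 * (real n - 3) * \<rho> + (real n - real m - 2) * (2 * \<rho>)"
    using bd matching path sum_W_split[of "{b, d}" "?t c" "2 * \<rho>", OF _ end_term[of c]] by (simp add: mult_ac)
  finally show ?thesis
    unfolding cut_mom2_eq matching by (simp add: algebra_simps)
qed

end

section \<open>Eigenvectors of the cut matrix\<close>

definition lin_eval :: "nat \<Rightarrow> (nat set option \<Rightarrow> real) \<Rightarrow> (nat set \<Rightarrow> real) \<Rightarrow> real" where
  "lin_eval n v x = (\<Sum>\<nu>\<in>basis1 n. v \<nu> * mon \<nu> x)"

lemma lin_eval_add: "lin_eval n (\<lambda>\<mu>. v \<mu> + w \<mu>) x = lin_eval n v x + lin_eval n w x"
  by (simp add: lin_eval_def distrib_right sum.distrib)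

lemma lin_eval_diff: "lin_eval n (\<lambda>\<mu>. v \<mu> - w \<mu>) x = lin_eval n v x - lin_eval n w x"
  by (simp add: lin_eval_def left_diff_distrib sum_subtractf)

lemma lin_eval_minus: "lin_eval n (\<lambda>\<mu>. - v \<mu>) x = - lin_eval n v x"
  by (simp add: lin_eval_def sum_negf)

lemma lin_eval_scale: "lin_eval n (\<lambda>\<mu>. c * v \<mu>) x = c * lin_eval n v x"
  by (simp add: lin_eval_def sum_distrib_left mult.assoc)

lemma lin_eval_sum: "lin_eval n (\<lambda>\<mu>. \<Sum>k\<in>K. v k \<mu>) x = (\<Sum>k\<in>K. lin_eval n (v k) x)"
  by (simp add: lin_eval_def sum_distrib_right sum.swap[of _ K])

lemmas lin_eval_linear = lin_eval_add lin_eval_diff lin_eval_minus lin_eval_scale lin_eval_sum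

lemma finite_edges: "finite (edges n)"
  by (rule finite_subset[of _ "Pow {1..n}"]) (auto simp: edges_def)

lemma finite_basis1: "finite (basis1 n)"
  by (simp add: basis1_def finite_edges)

lemma edge_in_basis1: "i \<in> {1..n} \<Longrightarrow> j \<in> {1..n} \<Longrightarrow> i \<noteq> j \<Longrightarrow> Some {i, j} \<in> basis1 n"
  unfolding basis1_def edges_def by blast

lemma basis1_cases:
  assumes "\<mu> \<in> basis1 n"
  obtains "\<mu> = None" | i j where "\<mu> = Some {i, j}" "i \<in> {1..n}" "j \<in> {1..n}" "i \<noteq> j"
  using assms unfolding basis1_def edges_def by auto

lemma lin_eval_one_v: "lin_eval n one_v x = 1"
proof -
  have "lin_eval n one_v x = (\<Sum>\<nu>\<in>basis1 n. if \<nu> = None then mon \<nu> x else 0)"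
    unfolding lin_eval_def one_v_def by (rule sum.cong) auto
  then show ?thesis by (simp add: finite_edges basis1_def)
qed

lemma lin_eval_xv:
  assumes "i \<in> {1..n}" "j \<in> {1..n}" "i \<noteq> j"
  shows "lin_eval n (xv i j) x = x {i, j}"
proof -
  have "lin_eval n (xv i j) x = (\<Sum>\<nu>\<in>basis1 n. if \<nu> = Some {i, j} then mon \<nu> x else 0)"
    unfolding lin_eval_def xv_def by (rule sum.cong) auto
  then show ?thesis using edge_in_basis1[OF assms] by (simp add: finite_basis1)
qed

lemma xv_commute: "xv i j = xv j i"
  by (simp add: xv_def insert_commute)

lemma xv_outside_basis1:
  "i \<in> {1..n} \<Longrightarrow> j \<in> {1..n} \<Longrightarrow> i \<noteq> j \<Longrightarrow> \<mu> \<notin> basis1 n \<Longrightarrow> xv i j \<mu> = 0"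
  unfolding xv_def using edge_in_basis1 by auto

lemma one_v_outside_basis1: "\<mu> \<notin> basis1 n \<Longrightarrow> one_v \<mu> = 0"
  unfolding one_v_def basis1_def by auto

definition relabel_basis :: "(nat \<Rightarrow> nat) \<Rightarrow> nat set option \<Rightarrow> nat set option" where
  "relabel_basis \<tau> = map_option ((`) \<tau>)"

lemma mon_relabel: "mon \<mu> (relabel \<tau> x) = mon (relabel_basis \<tau> \<mu>) x"
  by (cases \<mu>) (simp_all add: relabel_def relabel_basis_def)

lemma xv_relabel_transpose:
  "xv i j (relabel_basis (transpose a b) \<mu>) = xv (transpose a b i) (transpose a b j) \<mu>"
proof (cases \<mu>)
  case (Some e)
  have "transpose a b ` transpose a b ` A = A" for A
    by (simp add: image_comp)
  then have "transpose a b ` e = {i, j} \<longleftrightarrow> e = transpose a b ` {i, j}"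
    by metis
  then show ?thesis by (simp add: Some xv_def relabel_basis_def)
qed (simp add: xv_def relabel_basis_def)

context ham_cut
begin

definition cut_total :: real where
  "cut_total = (\<Sum>x\<in>X. cutval n U x)"

lemma cut_total_eq: "cut_total = (real n - 2) * (real n - 3) * (real m - 1) * (real n - real m - 1) * \<rho>"
proof -
  have "cut_total = (\<Sum>u\<in>U. \<Sum>w\<in>W. \<Sum>x\<in>X. x {u, w}) - 2 * real (card X)"
    unfolding cut_total_def cutval_def by (simp add: sum_subtractf sum.swap[of _ X])
  also have "(\<Sum>u\<in>U. \<Sum>w\<in>W. \<Sum>x\<in>X. x {u, w}) = real m * ((real n - real m) * ((real n - 2) * (real n - 3) * \<rho>))"
    using moment_edge by (intro sum_U_split[of "{}", simplified] sum_W_const) (auto simp: U_bounds U_W_neq)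
  also have "2 * real (card X) = (real n - 1) * (real n - 2) * (real n - 3) * \<rho>"
    unfolding \<rho>_def using n_ge_6 by simp
  finally show ?thesis by (simp add: algebra_simps)
qed

lemma cut_total_pos: "cut_total > 0"
  unfolding cut_total_eq using rho_pos n_ge_6 card_U_ge card_U_le by simp

definition cut_mom :: "((nat set \<Rightarrow> real) \<Rightarrow> real) \<Rightarrow> nat set option \<Rightarrow> real" where
  "cut_mom P \<mu> = (\<Sum>x\<in>X. cutval n U x * mon \<mu> x * P x)"

lemma AU_apply: "(\<Sum>\<nu>\<in>basis1 n. AU n U \<mu> \<nu> * v \<nu>) = cut_mom (lin_eval n v) \<mu> / cut_total"
proof -
  have hU: "hU n U x = real (card X) / cut_total * cutval n U x" for x
    unfolding hU_def cut_total_def by simp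
  have "(\<Sum>\<nu>\<in>basis1 n. AU n U \<mu> \<nu> * v \<nu>)
      = (\<Sum>x\<in>X. hU n U x * mon \<mu> x * lin_eval n v x) / real (card X)"
    unfolding AU_def qmat_def lin_eval_def
    by (simp add: sum_distrib_left sum_distrib_right sum_divide_distrib sum.swap[of _ X] mult_ac)
  also have "\<dots> = cut_mom (lin_eval n v) \<mu> / cut_total"
    unfolding cut_mom_def hU using card_X_pos
    by (simp add: sum_distrib_left sum_divide_distrib mult_ac)
  finally show ?thesis .
qed

lemma is_eigvec_AU_intro:
  assumes "\<And>\<mu>. \<mu> \<notin> basis1 n \<Longrightarrow> v \<mu> = 0" and "\<nu> \<in> basis1 n" "v \<nu> \<noteq> 0"
    and "\<And>x. x \<in> X \<Longrightarrow> lin_eval n v x = P x"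
    and "\<And>\<mu>. \<mu> \<in> basis1 n \<Longrightarrow> cut_mom P \<mu> = lam * cut_total * v \<mu>"
  shows "is_eigvec n (AU n U) v lam"
proof -
  have "cut_mom (lin_eval n v) = cut_mom P"
    unfolding cut_mom_def using assms(4) by (intro ext sum.cong) auto
  then show ?thesis
    unfolding is_eigvec_def AU_apply using assms cut_total_pos by auto
qed

lemma cutval_relabel:
  assumes \<tau>: "\<tau> permutes S" "\<tau> ` U = U"
  shows "cutval n U (relabel \<tau> x) = cutval n U x"
proof -
  have W: "\<tau> ` W = W"
    using \<tau> permutes_inj[OF \<tau>(1)] by (simp add: image_set_diff permutes_image)
  have inj: "inj_on \<tau> A" for A
    using permutes_inj[OF \<tau>(1)] by (simp add: inj_on_def inj_def)
  have "(\<Sum>u\<in>U. \<Sum>w\<in>W. x {\<tau> u, \<tau> w}) = (\<Sum>u\<in>\<tau> ` U. \<Sum>w\<in>\<tau> ` W. x {u, w})"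
    by (simp add: sum.reindex[OF inj])
  also have "\<dots> = (\<Sum>u\<in>U. \<Sum>w\<in>W. x {u, w})"
    unfolding \<tau>(2) W ..
  finally show ?thesis
    by (simp add: cutval_def)
qed

lemma cut_mom_relabel:
  assumes \<tau>: "\<tau> permutes S" "\<tau> ` U = U" and P: "\<And>x. x \<in> X \<Longrightarrow> P (relabel \<tau> x) = - P x"
  shows "cut_mom P (relabel_basis \<tau> \<mu>) = - cut_mom P \<mu>"
proof -
  have "cut_mom P \<mu> = (\<Sum>x\<in>X. cutval n U (relabel \<tau> x) * mon \<mu> (relabel \<tau> x) * P (relabel \<tau> x))"
    unfolding cut_mom_def by (rule sum_HX_relabel[OF \<tau>(1), symmetric])
  also have "\<dots> = - cut_mom P (relabel_basis \<tau> \<mu>)"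
    unfolding cut_mom_def by (simp add: cutval_relabel[OF \<tau>] mon_relabel P sum_negf[symmetric])
  finally show ?thesis by simp
qed

lemma cut_mom_cong: "(\<And>x. x \<in> X \<Longrightarrow> P x = Q x) \<Longrightarrow> cut_mom P \<mu> = cut_mom Q \<mu>"
  unfolding cut_mom_def by (intro sum.cong) auto

lemma cut_mom_scale: "cut_mom (\<lambda>x. k * P x) \<mu> = k * cut_mom P \<mu>"
  unfolding cut_mom_def by (simp add: sum_distrib_left mult_ac)

lemma cut_mom_edge_diffs:
  "cut_mom (\<lambda>x. \<Sum>l\<in>L. x (f l) - x (g l)) (Some e) = (\<Sum>l\<in>L. cut_mom2 e (f l) - cut_mom2 e (g l))"
  unfolding cut_mom_def cut_mom2_def
  by (simp add: sum_distrib_left sum_subtractf sum.swap[of _ X] algebra_simps)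

lemma cut_mom_alternating:
  "cut_mom (\<lambda>x. x e1 - x e2 + x e3 - x e4) (Some e)
     = cut_mom2 e e1 - cut_mom2 e e2 + cut_mom2 e e3 - cut_mom2 e e4"
  unfolding cut_mom_def cut_mom2_def by (simp add: algebra_simps sum_subtractf sum.distrib)

text \<open>If \<open>P\<close> and \<open>v\<close> change sign under \<open>\<tau>\<close>, the eigen-equation holds at
  \<open>relabel_basis \<tau> \<mu>\<close> as soon as it holds at \<open>\<mu>\<close>, and it holds trivially where \<open>\<tau>\<close>
  fixes \<open>\<mu>\<close>.\<close>

definition odd_under ::
    "(nat \<Rightarrow> nat) \<Rightarrow> ((nat set \<Rightarrow> real) \<Rightarrow> real) \<Rightarrow> (nat set option \<Rightarrow> real) \<Rightarrow> bool" where
  "odd_under \<tau> P v \<longleftrightarrow> \<tau> permutes S \<and> \<tau> ` U = U \<and>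
     (\<forall>x\<in>X. P (relabel \<tau> x) = - P x) \<and> (\<forall>\<mu>. v (relabel_basis \<tau> \<mu>) = - v \<mu>)"

lemma odd_under_transposeI:
  assumes "a \<in> S" "b \<in> S" "a \<in> U \<longleftrightarrow> b \<in> U"
    and "\<And>x. x \<in> X \<Longrightarrow> P (relabel (transpose a b) x) = - P x"
    and "\<And>\<mu>. v (relabel_basis (transpose a b) \<mu>) = - v \<mu>"
  shows "odd_under (transpose a b) P v"
  unfolding odd_under_def using assms by (simp add: permutes_swap_id)

lemma cut_mom_eq_relabel:
  assumes odd: "odd_under \<tau> P v" and eq: "cut_mom P \<mu> = c * v \<mu>"
  shows "cut_mom P (relabel_basis \<tau> \<mu>) = c * v (relabel_basis \<tau> \<mu>)"
  using odd cut_mom_relabel[of \<tau> P \<mu>] eq unfolding odd_under_def by simp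

lemma cut_mom_eq_fixed:
  assumes odd: "odd_under \<tau> P v" and fixed: "relabel_basis \<tau> \<mu> = \<mu>"
  shows "cut_mom P \<mu> = c * v \<mu>"
proof -
  have "cut_mom P \<mu> = - cut_mom P \<mu>" "v \<mu> = - v \<mu>"
    using odd cut_mom_relabel[of \<tau> P \<mu>] fixed unfolding odd_under_def by metis+
  then show ?thesis by simp
qed

lemma vertex_eigvec:
  assumes i: "i \<in> S"
  shows "is_eigvec n (AU n U) (\<lambda>\<mu>. 2 * one_v \<mu> - (\<Sum>j\<in>S - {i}. xv i j \<mu>)) 0"
proof (rule is_eigvec_AU_intro)
  show "2 * one_v \<mu> - (\<Sum>j\<in>S - {i}. xv i j \<mu>) = 0" if "\<mu> \<notin> basis1 n" for \<mu>
    using that i by (auto intro!: sum.neutral xv_outside_basis1 simp: one_v_outside_basis1)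
  show "None \<in> basis1 n" "2 * one_v None - (\<Sum>j\<in>S - {i}. xv i j None) \<noteq> 0"
    by (simp_all add: basis1_def one_v_def xv_def)
  show "lin_eval n (\<lambda>\<mu>. 2 * one_v \<mu> - (\<Sum>j\<in>S - {i}. xv i j \<mu>)) x = 2 - (\<Sum>j\<in>S - {i}. x {i, j})" for x
    using i by (simp add: lin_eval_linear lin_eval_one_v lin_eval_xv)
  show "cut_mom (\<lambda>x. 2 - (\<Sum>j\<in>S - {i}. x {i, j})) \<mu>
      = 0 * cut_total * (2 * one_v \<mu> - (\<Sum>j\<in>S - {i}. xv i j \<mu>))" for \<mu>
    unfolding cut_mom_def using X_degree[OF _ i] by simp
qed

lemma cut_mom_eq_four_cycle:
  assumes abcd: "distinct [a, b, c, d]"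
    and odd_ac: "odd_under (transpose a c) P v" and odd_bd: "odd_under (transpose b d) P v"
    and eq_ab: "cut_mom P (Some {a, b}) = k * v (Some {a, b})"
    and \<mu>: "\<mu> \<in> basis1 n"
  shows "cut_mom P \<mu> = k * v \<mu>"
proof -
  have eq_bc: "cut_mom P (Some {b, c}) = k * v (Some {b, c})"
    using cut_mom_eq_relabel[OF odd_ac eq_ab] abcd by (simp add: relabel_basis_def insert_commute)
  have eq_cd: "cut_mom P (Some {c, d}) = k * v (Some {c, d})"
    using cut_mom_eq_relabel[OF odd_bd eq_bc] abcd by (simp add: relabel_basis_def insert_commute)
  have eq_da: "cut_mom P (Some {d, a}) = k * v (Some {d, a})"
    using cut_mom_eq_relabel[OF odd_ac eq_cd] abcd by (simp add: relabel_basis_def insert_commute)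
  from \<mu> show ?thesis
  proof (cases rule: basis1_cases)
    case 1
    then show ?thesis by (intro cut_mom_eq_fixed[OF odd_ac]) (simp add: relabel_basis_def)
  next
    case (2 i j)
    show ?thesis
    proof (cases "transpose a c ` {i, j} = {i, j} \<or> transpose b d ` {i, j} = {i, j}")
      case True
      then have "relabel_basis (transpose a c) \<mu> = \<mu> \<or> relabel_basis (transpose b d) \<mu> = \<mu>"
        using 2(1) by (auto simp: relabel_basis_def)
      then show ?thesis
        using cut_mom_eq_fixed[OF odd_ac] cut_mom_eq_fixed[OF odd_bd] by blast
    next
      case False
      then have "{i, j} \<in> {{a, b}, {b, c}, {c, d}, {d, a}}"
        using 2 abcd by (intro four_cycle_edge_if_moved) auto
      then show ?thesis
        using 2 eq_ab eq_bc eq_cd eq_da by auto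
    qed
  qed
qed

lemma four_cycle_eigvec:
  assumes abcd: "{a, b, c, d} \<subseteq> S" "distinct [a, b, c, d]"
    and sides: "a \<in> U \<longleftrightarrow> c \<in> U" "b \<in> U \<longleftrightarrow> d \<in> U"
    and lam: "cut_mom2 {a, b} {a, b} - cut_mom2 {a, b} {b, c} + cut_mom2 {a, b} {c, d} - cut_mom2 {a, b} {d, a}
      = lam * cut_total"
  shows "is_eigvec n (AU n U) (\<lambda>\<mu>. xv a b \<mu> - xv b c \<mu> + xv c d \<mu> - xv d a \<mu>) lam"
    (is "is_eigvec n _ ?v lam")
proof (rule is_eigvec_AU_intro)
  let ?P = "\<lambda>x. x {a, b} - x {b, c} + x {c, d} - x {d, a}"
  show "?v \<mu> = 0" if "\<mu> \<notin> basis1 n" for \<mu>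
    using that abcd xv_outside_basis1[where i = a and j = b] xv_outside_basis1[where i = b and j = c]
      xv_outside_basis1[where i = c and j = d] xv_outside_basis1[where i = d and j = a] by auto
  show "Some {a, b} \<in> basis1 n" "?v (Some {a, b}) \<noteq> 0"
    using abcd by (auto simp: edge_in_basis1 xv_def doubleton_eq_iff)
  show "lin_eval n ?v x = ?P x" for x
    using abcd by (simp add: lin_eval_linear lin_eval_xv)
  show "cut_mom ?P \<mu> = lam * cut_total * ?v \<mu>" if "\<mu> \<in> basis1 n" for \<mu>
  proof (rule cut_mom_eq_four_cycle[OF abcd(2) _ _ _ that])
    show "odd_under (transpose a c) ?P ?v" "odd_under (transpose b d) ?P ?v"
      by (rule odd_under_transposeI;
          use abcd sides in \<open>auto simp: xv_relabel_transpose xv_commute insert_commute\<close>)+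
    show "cut_mom ?P (Some {a, b}) = lam * cut_total * ?v (Some {a, b})"
      using abcd lam by (auto simp: cut_mom_alternating xv_def doubleton_eq_iff)
  qed
qed

lemma cut_factors_nonzero:
  "real n - 2 \<noteq> 0" "real n - 3 \<noteq> 0" "real m - 1 \<noteq> 0" "real m - 2 \<noteq> 0"
  "real n - real m - 1 \<noteq> 0" "real n - real m - 2 \<noteq> 0"
  using n_ge_6 card_U_ge card_U_le by auto

lemma four_cycle_eigvec_U:
  assumes "i \<in> U" "j \<in> U" "f \<in> U" "g \<in> U" "distinct [i, j, f, g]"
  shows "is_eigvec n (AU n U) (\<lambda>\<mu>. xv i j \<mu> - xv j f \<mu> + xv f g \<mu> - xv g i \<mu>)
           (2 * (real m - 2) / ((real n - 2) * (real m - 1)))"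
proof (rule four_cycle_eigvec)
  show "{i, j, f, g} \<subseteq> S" "distinct [i, j, f, g]" "i \<in> U \<longleftrightarrow> f \<in> U" "j \<in> U \<longleftrightarrow> g \<in> U"
    using assms U_subset by auto
  have "cut_mom2 {i, j} {i, j} - cut_mom2 {i, j} {j, f} + cut_mom2 {i, j} {f, g} - cut_mom2 {i, j} {g, i}
      = 2 * (real n - 3) * (real m - 2) * (real n - real m - 1) * \<rho>"
    using assms cut_mom2_edge_UU[of i j] cut_mom2_matching_UUUU[of i j f g]
      cut_mom2_cherry_UUU[where c = j and a = i and b = f] cut_mom2_cherry_UUU[where c = i and a = j and b = g]
    by (simp add: insert_commute)
  also have "\<dots> = 2 * (real m - 2) / ((real n - 2) * (real m - 1)) * cut_total"
    unfolding cut_total_eq using cut_factors_nonzero by (simp add: divide_simps; simp add: algebra_simps)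
  finally show "cut_mom2 {i, j} {i, j} - cut_mom2 {i, j} {j, f} + cut_mom2 {i, j} {f, g} - cut_mom2 {i, j} {g, i}
      = 2 * (real m - 2) / ((real n - 2) * (real m - 1)) * cut_total" .
qed

lemma four_cycle_eigvec_UW:
  assumes ij: "i \<in> U" "j \<in> U" "i \<noteq> j" and pq: "p \<in> W" "q \<in> W" "p \<noteq> q"
  shows "is_eigvec n (AU n U) (\<lambda>\<mu>. xv i p \<mu> - xv i q \<mu> + xv j q \<mu> - xv j p \<mu>)
          (2 * (real m * (real n - 3) * (real n - real m) - (real n - 2)^2)
            / ((real n - 2) * (real n - 3) * (real m - 1) * (real n - real m - 1)))"
    (is "is_eigvec n _ _ ?lam")
proof -
  have "is_eigvec n (AU n U) (\<lambda>\<mu>. xv i p \<mu> - xv p j \<mu> + xv j q \<mu> - xv q i \<mu>) ?lam"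
  proof (rule four_cycle_eigvec)
    show "{i, p, j, q} \<subseteq> S" "distinct [i, p, j, q]" "i \<in> U \<longleftrightarrow> j \<in> U" "p \<in> U \<longleftrightarrow> q \<in> U"
      using ij pq U_subset by auto
    have "cut_mom2 {i, p} {i, p} - cut_mom2 {i, p} {p, j} + cut_mom2 {i, p} {j, q} - cut_mom2 {i, p} {q, i}
        = 2 * (real m * (real n - 3) * (real n - real m) - (real n - 2)^2) * \<rho>"
      using ij pq cut_mom2_edge_UW[of i p] cut_mom2_matching_UWUW[where a = i and b = p and c = j and d = q]
        cut_mom2_cherry_WUU[where c = p and a = i and b = j] cut_mom2_cherry_UWW[where c = i and a = p and b = q]
      by (simp add: insert_commute algebra_simps power2_eq_square)
    also have "\<dots> = ?lam * cut_total"
      unfolding cut_total_eq using cut_factors_nonzero by (simp add: divide_simps; simp add: algebra_simps)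
    finally show "cut_mom2 {i, p} {i, p} - cut_mom2 {i, p} {p, j} + cut_mom2 {i, p} {j, q} - cut_mom2 {i, p} {q, i}
        = ?lam * cut_total" .
  qed
  moreover have "(\<lambda>\<mu>. xv i p \<mu> - xv p j \<mu> + xv j q \<mu> - xv q i \<mu>)
      = (\<lambda>\<mu>. xv i p \<mu> - xv i q \<mu> + xv j q \<mu> - xv j p \<mu>)"
    by (simp add: fun_eq_iff xv_commute[of p j] xv_commute[of q i])
  ultimately show ?thesis by simp
qed

lemma real_card_U_minus2:
  "i \<in> U \<Longrightarrow> j \<in> U \<Longrightarrow> i \<noteq> j \<Longrightarrow> real (card (U - {i, j})) = real m - 2"
  using finite_U card_U_ge by (simp add: card_Diff_subset of_nat_diff)

lemma sum_punctured_split: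
  assumes "i \<in> U" "j \<in> U" "i \<noteq> j"
  shows "(\<Sum>w\<in>S - {i}. g w) = g j + (\<Sum>l\<in>U - {i, j}. g l) + (\<Sum>t\<in>W. g t)"
proof -
  have "S - {i} = insert j ((U - {i, j}) \<union> W)" using assms U_subset by auto
  moreover have "sum g ((U - {i, j}) \<union> W) = sum g (U - {i, j}) + sum g W"
    using finite_U by (intro sum.union_disjoint) auto
  ultimately show ?thesis
    using finite_U assms by (simp add: add.assoc)
qed

lemma star_balance:
  assumes ij: "i \<in> U" "j \<in> U" "i \<noteq> j" and x: "x \<in> X"
  shows "(\<Sum>t\<in>W. x {i, t} - x {j, t}) = - (\<Sum>l\<in>U - {i, j}. x {i, l} - x {j, l})"
proof -
  have "x {i, j} + (\<Sum>l\<in>U - {i, j}. x {i, l}) + (\<Sum>t\<in>W. x {i, t}) = 2"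
    using X_degree[OF x, of i] sum_punctured_split[OF ij, of "\<lambda>w. x {i, w}"] ij U_subset by auto
  moreover have "x {j, i} + (\<Sum>l\<in>U - {j, i}. x {j, l}) + (\<Sum>t\<in>W. x {j, t}) = 2"
    using X_degree[OF x, of j] sum_punctured_split[of j i, of "\<lambda>w. x {j, w}"] ij U_subset by auto
  ultimately show ?thesis by (simp add: insert_commute sum_subtractf)
qed

lemma cut_mom2_star_diff_U:
  assumes "i \<in> U" "j \<in> U" "y \<in> U" "distinct [i, j, y]"
  shows "(\<Sum>l\<in>U - {i, j}. cut_mom2 {i, y} {i, l} - cut_mom2 {i, y} {j, l})
           = 2 * (real m - 2) * (real n - real m) * (real n - real m - 1) * \<rho>"
proof -
  have "(\<Sum>l\<in>U - {i, j}. cut_mom2 {i, y} {i, l} - cut_mom2 {i, y} {j, l})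
      = (cut_mom2 {i, y} {i, y} - cut_mom2 {i, y} {j, y})
        + (real m - 3) * (2 * (real m - 3) * (real n - real m - 1) * \<rho> - 4 * (real m - 3) * (real n - real m - 1) * \<rho>)"
    using sum_split_off_const[of "U - {i, j}" "{y}"] assms finite_U real_card_U_minus2[of i j]
      cut_mom2_cherry_UUU[where c = i and a = y] cut_mom2_matching_UUUU[where a = i and b = y and c = j]
    by auto
  also have "cut_mom2 {i, y} {j, y} = 2 * (real m - 3) * (real n - real m - 1) * \<rho>"
    using assms cut_mom2_cherry_UUU[where c = y and a = i and b = j] by (simp add: insert_commute)
  finally show ?thesis
    using assms cut_mom2_edge_UU[of i y] by (simp add: algebra_simps)
qed

lemma cut_mom2_star_diff_W:
  assumes "i \<in> U" "j \<in> U" "i \<noteq> j" "y \<in> W"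
  shows "(\<Sum>t\<in>W. cut_mom2 {i, y} {i, t} - cut_mom2 {i, y} {j, t})
           = 2 * (real m - 2)^2 * (real n - real m - 1) * \<rho>"
proof -
  have "(\<Sum>t\<in>W. cut_mom2 {i, y} {i, t} - cut_mom2 {i, y} {j, t})
      = (cut_mom2 {i, y} {i, y} - cut_mom2 {i, y} {j, y})
        + (real n - real m - 1) * (2 * (real m - 1) * (real n - real m - 1) * \<rho>
            - (4 * (real m - 1) * (real n - real m - 1) - 2) * \<rho>)"
    using sum_W_split[of "{y}"] assms
      cut_mom2_cherry_UWW[where c = i and a = y] cut_mom2_matching_UWUW[where a = i and b = y and c = j]
    by auto
  also have "cut_mom2 {i, y} {j, y} = 2 * (real m - 1) * (real n - real m - 1) * \<rho>"
    using assms cut_mom2_cherry_WUU[where c = y and a = i and b = j] by (simp add: insert_commute)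
  finally show ?thesis
    using assms cut_mom2_edge_UW[of i y] by (simp add: algebra_simps power2_eq_square)
qed

definition star_diff_vec :: "real \<Rightarrow> nat \<Rightarrow> nat \<Rightarrow> nat set option \<Rightarrow> real" where
  "star_diff_vec c i j \<mu> =
     (\<Sum>l\<in>U - {i, j}. c * xv i l \<mu> - c * xv j l \<mu>) + (\<Sum>t\<in>W. - xv i t \<mu> + xv j t \<mu>)"

definition star_diff_poly :: "real \<Rightarrow> nat \<Rightarrow> nat \<Rightarrow> (nat set \<Rightarrow> real) \<Rightarrow> real" where
  "star_diff_poly c i j x =
     (\<Sum>l\<in>U - {i, j}. c * x {i, l} - c * x {j, l}) + (\<Sum>t\<in>W. - x {i, t} + x {j, t})"

lemma lin_eval_star_diff_vec:
  assumes "i \<in> U" "j \<in> U" "i \<noteq> j"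
  shows "lin_eval n (star_diff_vec c i j) x = star_diff_poly c i j x"
proof -
  have "lin_eval n (star_diff_vec c i j) x = (\<Sum>l\<in>U - {i, j}. c * lin_eval n (xv i l) x - c * lin_eval n (xv j l) x)
      + (\<Sum>t\<in>W. - lin_eval n (xv i t) x + lin_eval n (xv j t) x)"
    unfolding star_diff_vec_def[abs_def] by (simp add: lin_eval_linear)
  also have "\<dots> = star_diff_poly c i j x"
    unfolding star_diff_poly_def using assms
    by (intro arg_cong2[where f = "(+)"] sum.cong refl) (auto simp: lin_eval_xv U_bounds U_W_neq)
  finally show ?thesis .
qed

lemma star_diff_vec_outside_basis1:
  assumes "i \<in> U" "j \<in> U" "\<mu> \<notin> basis1 n"
  shows "star_diff_vec c i j \<mu> = 0"
proof -
  have zero: "xv a b \<mu> = 0" if "a \<in> U" "b \<in> S" "a \<noteq> b" for a b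
    using that assms(3) U_subset by (intro xv_outside_basis1) auto
  have "(\<Sum>l\<in>U - {i, j}. c * xv i l \<mu> - c * xv j l \<mu>) = 0"
    by (rule sum.neutral) (use zero assms in \<open>auto simp: U_bounds\<close>)
  moreover have "(\<Sum>t\<in>W. - xv i t \<mu> + xv j t \<mu>) = 0"
    by (rule sum.neutral) (use zero assms in \<open>auto simp: U_W_neq\<close>)
  ultimately show ?thesis unfolding star_diff_vec_def by simp
qed

lemma star_diff_odd:
  assumes ij: "i \<in> U" "j \<in> U" "i \<noteq> j"
  shows "odd_under (transpose i j) (star_diff_poly c i j) (star_diff_vec c i j)"
proof (rule odd_under_transposeI)
  show "star_diff_poly c i j (relabel (transpose i j) x) = - star_diff_poly c i j x" for x
  proof -
    have "(\<Sum>l\<in>U - {i, j}. c * x {transpose i j i, transpose i j l} - c * x {transpose i j j, transpose i j l})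
        = (\<Sum>l\<in>U - {i, j}. c * x {j, l} - c * x {i, l})"
      by (intro sum.cong) auto
    moreover have "(\<Sum>t\<in>W. - x {transpose i j i, transpose i j t} + x {transpose i j j, transpose i j t})
        = (\<Sum>t\<in>W. - x {j, t} + x {i, t})"
      using ij by (intro sum.cong) (auto simp: U_W_neq)
    ultimately show ?thesis
      unfolding star_diff_poly_def by (simp add: sum_subtractf sum.distrib sum_negf)
  qed
  show "star_diff_vec c i j (relabel_basis (transpose i j) \<mu>) = - star_diff_vec c i j \<mu>" for \<mu>
  proof -
    have "(\<Sum>l\<in>U - {i, j}. c * xv (transpose i j i) (transpose i j l) \<mu> - c * xv (transpose i j j) (transpose i j l) \<mu>)
        = (\<Sum>l\<in>U - {i, j}. c * xv j l \<mu> - c * xv i l \<mu>)"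
      by (intro sum.cong) auto
    moreover have "(\<Sum>t\<in>W. - xv (transpose i j i) (transpose i j t) \<mu> + xv (transpose i j j) (transpose i j t) \<mu>)
        = (\<Sum>t\<in>W. - xv j t \<mu> + xv i t \<mu>)"
      using ij by (intro sum.cong) (auto simp: U_W_neq)
    ultimately show ?thesis
      unfolding star_diff_vec_def xv_relabel_transpose by (simp add: sum_subtractf sum.distrib sum_negf)
  qed
qed (use ij U_subset in auto)

lemma star_diff_vec_at_U:
  assumes "i \<noteq> j" "y \<in> U - {i, j}"
  shows "star_diff_vec c i j (Some {i, y}) = c"
proof -
  have "(\<Sum>l\<in>U - {i, j}. c * xv i l (Some {i, y}) - c * xv j l (Some {i, y}))
      = (\<Sum>l\<in>U - {i, j}. if l = y then c else 0)"
    by (rule sum.cong) (use assms in \<open>auto simp: xv_def doubleton_eq_iff\<close>)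
  moreover have "(\<Sum>t\<in>W. - xv i t (Some {i, y}) + xv j t (Some {i, y})) = 0"
    by (rule sum.neutral) (use assms in \<open>auto simp: xv_def doubleton_eq_iff\<close>)
  ultimately show ?thesis
    using assms finite_U by (simp add: star_diff_vec_def)
qed

lemma star_diff_vec_at_W:
  assumes "i \<in> U" "j \<in> U" "i \<noteq> j" "y \<in> W"
  shows "star_diff_vec c i j (Some {i, y}) = -1"
proof -
  have "(\<Sum>l\<in>U - {i, j}. c * xv i l (Some {i, y}) - c * xv j l (Some {i, y})) = 0"
    by (rule sum.neutral) (use assms in \<open>auto simp: xv_def doubleton_eq_iff\<close>)
  moreover have "(\<Sum>t\<in>W. - xv i t (Some {i, y}) + xv j t (Some {i, y})) = (\<Sum>t\<in>W. if t = y then -1 else 0)"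
    by (rule sum.cong) (use assms in \<open>auto simp: xv_def doubleton_eq_iff\<close>)
  ultimately show ?thesis
    using assms by (simp add: star_diff_vec_def)
qed

lemma star_diff_poly_eq_U:
  assumes "i \<in> U" "j \<in> U" "i \<noteq> j" "x \<in> X"
  shows "star_diff_poly c i j x = (c + 1) * (\<Sum>l\<in>U - {i, j}. x {i, l} - x {j, l})"
proof -
  have "(\<Sum>l\<in>U - {i, j}. c * x {i, l} - c * x {j, l}) = c * (\<Sum>l\<in>U - {i, j}. x {i, l} - x {j, l})"
    by (simp add: sum_distrib_left right_diff_distrib)
  moreover have "(\<Sum>t\<in>W. - x {i, t} + x {j, t}) = - (\<Sum>t\<in>W. x {i, t} - x {j, t})"
    by (simp add: sum_negf[symmetric])
  ultimately show ?thesis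
    unfolding star_diff_poly_def star_balance[OF assms] by (simp add: algebra_simps)
qed

lemma star_diff_poly_eq_W:
  assumes "i \<in> U" "j \<in> U" "i \<noteq> j" "x \<in> X"
  shows "star_diff_poly c i j x = - (c + 1) * (\<Sum>t\<in>W. x {i, t} - x {j, t})"
  using star_diff_poly_eq_U[OF assms] star_balance[OF assms] by (simp add: algebra_simps)

lemma cut_mom_star_diff_U:
  assumes "i \<in> U" "j \<in> U" "y \<in> U" "distinct [i, j, y]"
  shows "cut_mom (star_diff_poly c i j) (Some {i, y})
           = (c + 1) * (2 * (real m - 2) * (real n - real m) * (real n - real m - 1) * \<rho>)"
proof -
  have "cut_mom (star_diff_poly c i j) (Some {i, y})
      = cut_mom (\<lambda>x. (c + 1) * (\<Sum>l\<in>U - {i, j}. x {i, l} - x {j, l})) (Some {i, y})"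
    using assms by (intro cut_mom_cong star_diff_poly_eq_U) auto
  also have "\<dots> = (c + 1) * (\<Sum>l\<in>U - {i, j}. cut_mom2 {i, y} {i, l} - cut_mom2 {i, y} {j, l})"
    by (simp only: cut_mom_scale cut_mom_edge_diffs)
  finally show ?thesis
    using cut_mom2_star_diff_U[OF assms] by simp
qed

lemma cut_mom_star_diff_W:
  assumes "i \<in> U" "j \<in> U" "i \<noteq> j" "y \<in> W"
  shows "cut_mom (star_diff_poly c i j) (Some {i, y})
           = - (c + 1) * (2 * (real m - 2)^2 * (real n - real m - 1) * \<rho>)"
proof -
  have "cut_mom (star_diff_poly c i j) (Some {i, y})
      = cut_mom (\<lambda>x. - (c + 1) * (\<Sum>t\<in>W. x {i, t} - x {j, t})) (Some {i, y})"
    using assms by (intro cut_mom_cong star_diff_poly_eq_W) auto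
  also have "\<dots> = - (c + 1) * (\<Sum>t\<in>W. cut_mom2 {i, y} {i, t} - cut_mom2 {i, y} {j, t})"
    by (simp only: cut_mom_scale cut_mom_edge_diffs)
  finally show ?thesis
    using cut_mom2_star_diff_W[OF assms] by simp
qed

lemma star_diff_eigen_eq:
  assumes ij: "i \<in> U" "j \<in> U" "i \<noteq> j" and y: "y \<in> S - {i, j}"
  defines "c \<equiv> (real n - real m) / (real m - 2)" and "lam \<equiv> 2 * (real m - 2) / ((real n - 3) * (real m - 1))"
  shows "cut_mom (star_diff_poly c i j) (Some {i, y}) = lam * cut_total * star_diff_vec c i j (Some {i, y})"
proof -
  have c1: "c + 1 = (real n - 2) / (real m - 2)"
    unfolding c_def using cut_factors_nonzero by (simp add: divide_simps)
  have lam: "lam * cut_total = 2 * (real m - 2) * (real n - 2) * (real n - real m - 1) * \<rho>"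
    unfolding lam_def cut_total_eq using cut_factors_nonzero by (simp add: divide_simps; simp add: algebra_simps)
  show ?thesis
  proof (cases "y \<in> U")
    case True
    then have y_U: "y \<in> U" "distinct [i, j, y]" using y ij by auto
    have "cut_mom (star_diff_poly c i j) (Some {i, y})
        = (real n - 2) / (real m - 2) * (2 * (real m - 2) * (real n - real m) * (real n - real m - 1) * \<rho>)"
      using cut_mom_star_diff_U[where c = c, OF ij(1,2) y_U] unfolding c1 .
    also have "\<dots> = lam * cut_total * c"
      unfolding lam c_def using cut_factors_nonzero by (simp add: divide_simps)
    finally show ?thesis
      using star_diff_vec_at_U[of i j y] y_U ij by simp
  next
    case False
    then have y_W: "y \<in> W" using y by auto
    have "cut_mom (star_diff_poly c i j) (Some {i, y})
        = - ((real n - 2) / (real m - 2)) * (2 * (real m - 2)^2 * (real n - real m - 1) * \<rho>)"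
      using cut_mom_star_diff_W[where c = c, OF ij y_W] unfolding c1 .
    also have "\<dots> = lam * cut_total * (-1)"
      unfolding lam using cut_factors_nonzero by (simp add: divide_simps power2_eq_square)
    finally show ?thesis
      using star_diff_vec_at_W[OF ij y_W] by simp
  qed
qed

lemma star_diff_eigvec:
  assumes ij: "i \<in> U" "j \<in> U" "i \<noteq> j"
  shows "is_eigvec n (AU n U)
          (\<lambda>\<mu>. (\<Sum>l\<in>U - {i, j}. (real n - real m) / (real m - 2) * xv i l \<mu>
                                  - (real n - real m) / (real m - 2) * xv j l \<mu>)
              + (\<Sum>t\<in>W. - xv i t \<mu> + xv j t \<mu>))
          (2 * (real m - 2) / ((real n - 3) * (real m - 1)))"
proof -
  define c where "c = (real n - real m) / (real m - 2)"
  define lam where "lam = 2 * (real m - 2) / ((real n - 3) * (real m - 1))"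
  note eq_i = star_diff_eigen_eq[OF ij, folded c_def lam_def]
  have odd: "odd_under (transpose i j) (star_diff_poly c i j) (star_diff_vec c i j)"
    using star_diff_odd[OF ij] .
  obtain w where w: "w \<in> W" using W_nonempty by blast
  have "is_eigvec n (AU n U) (star_diff_vec c i j) lam"
  proof (rule is_eigvec_AU_intro)
    show "star_diff_vec c i j \<mu> = 0" if "\<mu> \<notin> basis1 n" for \<mu>
      using star_diff_vec_outside_basis1 ij that by blast
    show "Some {i, w} \<in> basis1 n" "star_diff_vec c i j (Some {i, w}) \<noteq> 0"
      using w ij U_subset star_diff_vec_at_W[OF ij w] by (auto intro!: edge_in_basis1)
    show "lin_eval n (star_diff_vec c i j) x = star_diff_poly c i j x" for x
      using lin_eval_star_diff_vec[OF ij] .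
    show "cut_mom (star_diff_poly c i j) \<mu> = lam * cut_total * star_diff_vec c i j \<mu>"
      if "\<mu> \<in> basis1 n" for \<mu>
      using that
    proof (cases rule: basis1_cases)
      case 1
      then show ?thesis by (intro cut_mom_eq_fixed[OF odd]) (simp add: relabel_basis_def)
    next
      case (2 p q)
      show ?thesis
      proof (cases "transpose i j ` {p, q} = {p, q}")
        case True
        then show ?thesis using 2 by (intro cut_mom_eq_fixed[OF odd]) (simp add: relabel_basis_def)
      next
        case False
        obtain y where y: "y \<in> {p, q}" "y \<notin> {i, j}" "{p, q} = {i, y} \<or> {p, q} = {j, y}"
          using 2(4) False by (rule edge_moved_by_transpose)
        have y_S: "y \<in> S - {i, j}" using y 2 by auto
        have "relabel_basis (transpose i j) (Some {i, y}) = Some {j, y}"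
          using y by (simp add: relabel_basis_def)
        then have "cut_mom (star_diff_poly c i j) (Some {j, y}) = lam * cut_total * star_diff_vec c i j (Some {j, y})"
          using cut_mom_eq_relabel[OF odd eq_i[OF y_S]] by simp
        then show ?thesis
          using y(3) 2(1) eq_i[OF y_S] by auto
      qed
    qed
  qed
  then show ?thesis unfolding star_diff_vec_def[abs_def] c_def lam_def .
qed

end

lemma cutval_complement:
  assumes "U \<subseteq> {1..n}"
  shows "cutval n ({1..n} - U) = cutval n U"
proof
  fix x :: "nat set \<Rightarrow> real"
  have "(\<Sum>u\<in>{1..n} - U. \<Sum>v\<in>U. x {u, v}) = (\<Sum>v\<in>U. \<Sum>u\<in>{1..n} - U. x {v, u})"
    by (subst sum.swap) (simp add: insert_commute)
  moreover have "{1..n} - ({1..n} - U) = U" using assms by auto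
  ultimately show "cutval n ({1..n} - U) x = cutval n U x"
    unfolding cutval_def by simp
qed

lemma AU_complement:
  assumes "U \<subseteq> {1..n}"
  shows "AU n ({1..n} - U) = AU n U"
  unfolding AU_def hU_def cutval_complement[OF assms] ..

theorem lemma3:
  fixes n m :: nat and U :: "nat set"
  assumes "n \<ge> 6" and "U \<subseteq> {1..n}" and "card U = m" and "3 \<le> m" and "2 * m \<le> n"
  shows
    "(\<forall>i\<in>{1..n}. is_eigvec n (AU n U)
        (\<lambda>\<mu>. 2 * one_v \<mu> - (\<Sum>j\<in>{1..n} - {i}. xv i j \<mu>)) 0)
   \<and> (\<forall>i\<in>U. \<forall>j\<in>U. \<forall>f\<in>U. \<forall>g\<in>U. distinct [i, j, f, g] \<longrightarrow>
        is_eigvec n (AU n U) (\<lambda>\<mu>. xv i j \<mu> - xv j f \<mu> + xv f g \<mu> - xv g i \<mu>)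
          (2 * (real m - 2) / ((real n - 2) * (real m - 1))))
   \<and> (\<forall>p\<in>{1..n} - U. \<forall>q\<in>{1..n} - U. \<forall>r\<in>{1..n} - U. \<forall>s\<in>{1..n} - U. distinct [p, q, r, s] \<longrightarrow>
        is_eigvec n (AU n U) (\<lambda>\<mu>. xv p q \<mu> - xv q r \<mu> + xv r s \<mu> - xv s p \<mu>)
          (2 * (real n - real m - 2) / ((real n - 2) * (real n - real m - 1))))
   \<and> (\<forall>i\<in>U. \<forall>j\<in>U. \<forall>p\<in>{1..n} - U. \<forall>q\<in>{1..n} - U. i \<noteq> j \<and> p \<noteq> q \<longrightarrow>
        is_eigvec n (AU n U) (\<lambda>\<mu>. xv i p \<mu> - xv i q \<mu> + xv j q \<mu> - xv j p \<mu>)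
          (2 * (real m * (real n - 3) * (real n - real m) - (real n - 2)^2)
            / ((real n - 2) * (real n - 3) * (real m - 1) * (real n - real m - 1))))
   \<and> (\<forall>i\<in>U. \<forall>j\<in>U. i \<noteq> j \<longrightarrow>
        is_eigvec n (AU n U)
          (\<lambda>\<mu>. (\<Sum>l\<in>U - {i, j}. (real n - real m) / (real m - 2) * xv i l \<mu>
                                  - (real n - real m) / (real m - 2) * xv j l \<mu>)
              + (\<Sum>t\<in>{1..n} - U. - xv i t \<mu> + xv j t \<mu>))
          (2 * (real m - 2) / ((real n - 3) * (real m - 1))))
   \<and> (\<forall>p\<in>{1..n} - U. \<forall>q\<in>{1..n} - U. p \<noteq> q \<longrightarrow>
        is_eigvec n (AU n U)
          (\<lambda>\<mu>. (\<Sum>t\<in>{1..n} - U - {p, q}. real m / (real n - real m - 2) * xv p t \<mu>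
                                  - real m / (real n - real m - 2) * xv q t \<mu>)
              + (\<Sum>l\<in>U. - xv p l \<mu> + xv q l \<mu>))
          (2 * (real n - real m - 2) / ((real n - 3) * (real n - real m - 1))))"
proof -
  have card_W: "card ({1..n} - U) = n - m"
    using assms(2,3) finite_subset[OF assms(2)] by (simp add: card_Diff_subset)
  interpret A: ham_cut n U
    by unfold_locales (use assms in auto)
  interpret B: ham_cut n "{1..n} - U"
    by unfold_locales (use assms card_W in auto)
  have AU_B: "AU n ({1..n} - U) = AU n U"
    using assms(2) by (rule AU_complement)
  have W_B: "{1..n} - ({1..n} - U) = U"
    using assms(2) by auto
  have m_B: "real (card ({1..n} - U)) = real n - real m"
    using card_W assms by (simp add: of_nat_diff)
  show ?thesis
    using A.vertex_eigvec A.four_cycle_eigvec_U A.four_cycle_eigvec_UW A.star_diff_eigvec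
      B.four_cycle_eigvec_U B.star_diff_eigvec
    unfolding AU_B W_B m_B assms(3) by (auto simp: algebra_simps)
qed

end
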